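(* In the setting of the context, for every $T>0$ and $\eta>0$ there exists a compact set $\mathbf K\subset\mathbf M_1$ such that $$\liminf_{r\to\infty}\mathbf P^r\big(\overline{\mathcal Z}^r(t)\in\mathbf K\text{ for all }t\in[0,T]\big)\ge1-\eta.$$
   Context: $\overline{\mathbb R}_+=[0,\infty]$; $\mathbf M_1$ is the space of finite nonnegative Borel measures on $\overline{\mathbb R}_+^2$ with the weak topology. Fluid data: $\lambda>0$; $\vartheta$ a Borel probability measure on $\overline{\mathbb R}_+^2$ with no mass on $\{0\}\times\overline{\mathbb R}_+$, $\overline{\mathbb R}_+\times\{0\}$, $\{(\infty,\infty)\}$, with $\rho=\lambda\mathbf E[B]>1$ for $(B,D)\sim\vartheta$; $\zeta_0\in\mathbf M_1$ with marginals free of atoms in $[0,\infty)$. Stochastic model: for each $r$ in a sequence $\mathcal R$ increasing to infinity, on $(\Omega^r,\mathcal F^r,\mathbf P^r)$: delayed renewal arrivals $E^r(t)$ of rate $\lambda^r>0$, jump times $U^r_i$; i.i.d. pairs $(B^r_i,D^r_i)$ with law $\vartheta^r$ on $\overline{\mathbb R}_+^2$ (no mass on $\{0\}\times\overline{\mathbb R}_+$, $\overline{\mathbb R}_+\times\{0\}$, $\{(\infty,\infty)\}$); an integer $Z^r(0)\ge0$ with finite mean and i.i.d. initial pairs $(B^{0,r}_j,D^{0,r}_j)$ in $(0,\infty]^2\setminus\{(\infty,\infty)\}$. Processor sharing: $Z^r(t)$ jobs present, $S^r(t)=\int_0^tZ^r(s)^{-1}ds$ (integrand $0$ if $Z^r(s)=0$);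 $B^r_i(t)=(B^r_i-(S^r(t)-S^r(U^r_i)))^+$, $D^r_i(t)=(U^r_i+D^r_i-t)^+$; state descriptor $\mathcal Z^r(t)=\sum_{j\le Z^r(0)}\delta^+_{((B^{0,r}_j-S^r(t))^+,(D^{0,r}_j-t)^+)}+\sum_{i\le E^r(t)}\delta^+_{(B^r_i(t),D^r_i(t))}$, where $\delta^+_{(x,y)}$ is the Dirac mass if $\min\{x,y\}>0$ and $0$ otherwise; $Z^r(t)$ is its total mass. Scaling: $\breve\vartheta^r(F\times G)=\vartheta^r(F\times rG)$, $\overline{\mathcal Z}^r(t)(F\times G)=r^{-1}\mathcal Z^r(rt)(F\times rG)$, $\overline E^r(t)=r^{-1}E^r(rt)$. Assumptions: as $r\to\infty$, $\overline E^r(\cdot)\to\lambda(\cdot)$ ($t\mapsto\lambda t$), $\breve\vartheta^r\to\vartheta$ weakly, $\overline{\mathcal Z}^r(0)\to\zeta_0$ in distribution in $\mathbf M_1$. *)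

theory Defs
  imports "HOL-Probability.Probability"
begin

text \<open>The extended half-line [0,\<infinity>] is rendered as the type ennreal;
  the state space is ennreal \<times> ennreal with the product topology.\<close>

type_synonym pt = "ennreal \<times> ennreal"

definition M1 :: "pt measure set" where
  "M1 = {M. sets M = sets (borel :: pt measure) \<and> emeasure M (space M) < \<infinity>}"

definition bcont :: "(pt \<Rightarrow> real) \<Rightarrow> bool" where
  "bcont f \<longleftrightarrow> continuous_on UNIV f \<and> bounded (range f)"

definition weak_top :: "pt measure topology" where
  "weak_top = topology_generated_by
     {{M \<in> M1. (\<integral>p. f p \<partial>M) \<in> U} | f U. bcont f \<and> open U}"

definition weak_conv :: "(nat \<Rightarrow> pt measure) \<Rightarrow> pt measure \<Rightarrow> bool" where
  "weak_conv Ms M \<longleftrightarrow> (\<forall>f. bcont f \<longrightarrow> (\<lambda>n. \<integral>p. f p \<partial>Ms n) \<longlonglongrightarrow> (\<integral>p. f p \<partial>M))"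

definition conv_distr_M1 :: "(nat \<Rightarrow> 'w measure) \<Rightarrow> (nat \<Rightarrow> 'w \<Rightarrow> pt measure) \<Rightarrow> pt measure \<Rightarrow> bool" where
  "conv_distr_M1 Om X mu \<longleftrightarrow>
     (\<forall>\<Phi>. continuous_map weak_top euclideanreal \<Phi> \<and> bounded (\<Phi> ` M1) \<longrightarrow>
        (\<lambda>n. \<integral>\<omega>. \<Phi> (X n \<omega>) \<partial>Om n) \<longlonglongrightarrow> \<Phi> mu)"

text \<open>Inner and outer probability (coincide with the probability on measurable events).\<close>
definition inner_prob :: "'w measure \<Rightarrow> 'w set \<Rightarrow> real" where
  "inner_prob M A = Sup {measure M B | B. B \<in> sets M \<and> B \<subseteq> A}"

definition outer_prob :: "'w measure \<Rightarrow> 'w set \<Rightarrow> real" where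
  "outer_prob M A = Inf {measure M B | B. B \<in> sets M \<and> A \<subseteq> B}"

text \<open>Point measure with weight c: sum over the list of c \<cdot> \<delta>^+_p, where
  \<delta>^+_(x,y) is the Dirac mass if min x y > 0 and the zero measure otherwise.\<close>
definition ptmeas :: "real \<Rightarrow> pt list \<Rightarrow> pt measure" where
  "ptmeas c ps = measure_of UNIV (sets borel)
     (\<lambda>A. ennreal c * of_nat (length (filter (\<lambda>p. p \<in> A \<and> 0 < fst p \<and> 0 < snd p) ps)))"

text \<open>Delayed renewal arrivals: interarrival times xi 0 (delay), xi 1, xi 2, ...;
  the i-th arrival time (i = 0,1,...) is U i = xi 0 + ... + xi i, and
  E(t) counts arrival times \<le> t.\<close>
definition arr_time :: "(nat \<Rightarrow> real) \<Rightarrow> nat \<Rightarrow> real" where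
  "arr_time xi i = (\<Sum>k\<le>i. xi k)"

definition arr_count :: "(nat \<Rightarrow> real) \<Rightarrow> real \<Rightarrow> nat" where
  "arr_count xi t = card {i. arr_time xi i \<le> t}"

text \<open>The (unfiltered) list of residual (service, patience) pairs at time t:
  initial jobs ((B0_j - S t)^+, (D0_j - t)^+), j < z0, and arrived jobs
  (B_i(t), D_i(t)) for the first E(t) arrivals.\<close>
definition job_pts :: "nat \<Rightarrow> (nat \<Rightarrow> ennreal) \<Rightarrow> (nat \<Rightarrow> ennreal) \<Rightarrow> (nat \<Rightarrow> real)
     \<Rightarrow> (nat \<Rightarrow> ennreal) \<Rightarrow> (nat \<Rightarrow> ennreal) \<Rightarrow> (real \<Rightarrow> real) \<Rightarrow> real \<Rightarrow> pt list" where
  "job_pts z0 B0 D0 xi B D S t =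
     map (\<lambda>j. (B0 j - ennreal (S t), D0 j - ennreal t)) [0..<z0] @
     map (\<lambda>i. (B i - ennreal (S t - S (arr_time xi i)), D i - ennreal (t - arr_time xi i)))
         [0..<arr_count xi t]"

definition state :: "nat \<Rightarrow> (nat \<Rightarrow> ennreal) \<Rightarrow> (nat \<Rightarrow> ennreal) \<Rightarrow> (nat \<Rightarrow> real)
     \<Rightarrow> (nat \<Rightarrow> ennreal) \<Rightarrow> (nat \<Rightarrow> ennreal) \<Rightarrow> (real \<Rightarrow> real) \<Rightarrow> real \<Rightarrow> pt measure" where
  "state z0 B0 D0 xi B D S t = ptmeas 1 (job_pts z0 B0 D0 xi B D S t)"

text \<open>Spatial scaling of the second coordinate: the image measure under
  (x,y) \<mapsto> (x, y/r), so that (rescale r M)(F \<times> G) = M (F \<times> rG).\<close>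
definition rescale :: "real \<Rightarrow> pt measure \<Rightarrow> pt measure" where
  "rescale r M = distr M borel (\<lambda>(x, y). (x, y / ennreal r))"

text \<open>Fluid scaling: \<bar>Z\<bar>^r(t)(F \<times> G) = r^{-1} \<Z>^r(rt)(F \<times> rG).\<close>
definition fluid_scale :: "real \<Rightarrow> (real \<Rightarrow> pt measure) \<Rightarrow> real \<Rightarrow> pt measure" where
  "fluid_scale r Zm t = scale_measure (ennreal (1 / r)) (rescale r (Zm (r * t)))"

end

theory Submission
  imports Defs
begin

text \<open>Every job present at time r t was either present initially or arrived by time r t, so
  the total mass of the fluid-scaled state is at most (Z(0) + E(r t)) / r. The initial mass
  converges in distribution to the mass of zeta0 (total mass is weakly continuous) and
  E(r t) / r stays within 1 of lam t on [0,T] with probability tending to 1, so with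
  probability tending to 1 the whole path on [0,T] has mass at most a constant C.

  Because [0,\<infinity>] \<times> [0,\<infinity>] is compact, the measures of mass at most C form a weakly compact set.
  To prove this with Helly's selection theorem on the real line, the quadrant is encoded into
  [0,1] by a Borel injection with a continuous left inverse G (map each coordinate into [0,1)
  and read the interleaved binary digits as a ternary expansion with digits 0 and 2). Every
  measure of mass at most C is then the image under G of a measure on [0,1] of mass at most C;
  these are sequentially compact by Helly, and a countable family of neighbourhoods given by
  Bernstein polynomials with rational coefficients turns sequential compactness into
  compactness of the image.\<close>

section \<open>A Borel injection of the quadrant into [0,1] with a continuous left inverse\<close>

text \<open>squash x = 1 / (2 (1 + x)), with squash \<infinity> = 0; unsquash inverts it on [0,1/2].\<close>

definition squash :: "ennreal \<Rightarrow> real" where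
  "squash x = enn2real (inverse (1 + x)) / 2"

definition unsquash :: "real \<Rightarrow> ennreal" where
  "unsquash u = ennreal (1 - 2 * u) * inverse (ennreal (2 * u))"

lemma inverse_one_plus_ennreal:
  assumes "0 \<le> r" shows "inverse (1 + ennreal r) = ennreal (inverse (1 + r))"
proof -
  have "1 + ennreal r = ennreal (1 + r)" using assms by simp
  then show ?thesis using assms by (simp add: inverse_ennreal del: ennreal_plus)
qed

lemma squash_range: "0 \<le> squash x \<and> squash x < 1"
proof (cases x)
  case (real r)
  then have "inverse (1 + r) \<le> 1" by (simp add: field_simps)
  with real show ?thesis by (simp add: squash_def inverse_one_plus_ennreal)
qed (simp add: squash_def)

lemma unsquash_squash: "unsquash (squash x) = x"
proof (cases x)
  case (real r)
  then have "2 * squash x = inverse (1 + r)"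
    by (simp add: squash_def inverse_one_plus_ennreal)
  moreover have "1 - inverse (1 + r) = r / (1 + r)" using real by (simp add: field_simps)
  ultimately have "unsquash (squash x) = ennreal (r / (1 + r)) * ennreal (1 + r)"
    using real by (simp add: unsquash_def inverse_ennreal)
  also have "\<dots> = ennreal (r / (1 + r) * (1 + r))"
    using real by (intro ennreal_mult[symmetric]) auto
  also have "r / (1 + r) * (1 + r) = r"
    using real by simp
  finally show ?thesis using real by simp
qed (simp add: squash_def unsquash_def)

lemma continuous_on_unsquash: "continuous_on UNIV unsquash"
  unfolding continuous_on_def
proof
  fix u :: real
  have "continuous_on UNIV (\<lambda>v::real. inverse (ennreal (2 * v)))"
    by (intro continuous_intros continuous_on_ennreal)
  then have "((\<lambda>v. inverse (ennreal (2 * v))) \<longlongrightarrow> inverse (ennreal (2 * u))) (at u)"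
    by (simp add: continuous_on_def)
  moreover have "((\<lambda>v. ennreal (1 - 2 * v)) \<longlongrightarrow> ennreal (1 - 2 * u)) (at u)"
    by (intro tendsto_intros)
  ultimately show "(unsquash \<longlongrightarrow> unsquash u) (at u within UNIV)"
    unfolding unsquash_def by (intro tendsto_mult_ennreal) (auto simp: ennreal_eq_0_iff)
qed

lemma squash_measurable [measurable]: "squash \<in> borel_measurable borel"
  unfolding squash_def by measurable

definition bin_digit :: "nat \<Rightarrow> real \<Rightarrow> int" where
  "bin_digit k u = \<lfloor>2 ^ Suc k * u\<rfloor> mod 2"

lemma bin_digit_01: "bin_digit k u \<in> {0, 1}"
  unfolding bin_digit_def by (simp; presburger)

lemma bin_digit_measurable [measurable]: "(\<lambda>u. real_of_int (bin_digit k u)) \<in> borel_measurable borel"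
  unfolding bin_digit_def by measurable

lemma floor_double: "\<lfloor>2 * y\<rfloor> = 2 * \<lfloor>y\<rfloor> + \<lfloor>2 * y\<rfloor> mod 2" for y :: real
proof -
  have "2 * \<lfloor>y\<rfloor> \<le> \<lfloor>2 * y\<rfloor>" "\<lfloor>2 * y\<rfloor> \<le> 2 * \<lfloor>y\<rfloor> + 1"
    by (simp_all add: le_floor_iff floor_le_iff) linarith
  then show ?thesis by presburger
qed

lemma floor_pow2_Suc: "\<lfloor>2 ^ Suc k * u\<rfloor> = 2 * \<lfloor>2 ^ k * u\<rfloor> + bin_digit k u"
  using floor_double[of "2 ^ k * u"] by (simp add: bin_digit_def mult.assoc)

lemma floor_pow2_eq_if_bin_digits_eq:
  "\<lfloor>u\<rfloor> = \<lfloor>u'\<rfloor> \<Longrightarrow> (\<forall>k<m. bin_digit k u = bin_digit k u') \<Longrightarrow> \<lfloor>2 ^ m * u\<rfloor> = \<lfloor>2 ^ m * u'\<rfloor>"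
proof (induction m)
  case (Suc m)
  then show ?case using floor_pow2_Suc[of m u] floor_pow2_Suc[of m u'] by simp
qed simp

lemma abs_diff_less_if_floor_pow2_eq:
  fixes u u' :: real
  assumes "\<lfloor>2 ^ m * u\<rfloor> = \<lfloor>2 ^ m * u'\<rfloor>"
  shows "\<bar>u - u'\<bar> < 1 / 2 ^ m"
proof -
  have "\<bar>2 ^ m * u - 2 ^ m * u'\<bar> < 1"
    using assms floor_correct[of "2 ^ m * u"] floor_correct[of "2 ^ m * u'"] by linarith
  then have "2 ^ m * \<bar>u - u'\<bar> < 1"
    by (simp add: abs_mult right_diff_distrib[symmetric])
  then show ?thesis by (simp add: field_simps)
qed

definition interleave_digits :: "real \<times> real \<Rightarrow> nat \<Rightarrow> int" where
  "interleave_digits q j =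
     (if even j then bin_digit (j div 2) (fst q) else bin_digit (j div 2) (snd q))"

lemma interleave_digits_01: "interleave_digits q j \<in> {0, 1}"
  unfolding interleave_digits_def using bin_digit_01 by auto

lemma interleave_digits_measurable [measurable]:
  "(\<lambda>q. real_of_int (interleave_digits q j)) \<in> borel_measurable borel"
  using measurable_compose[OF measurable_fst bin_digit_measurable]
    measurable_compose[OF measurable_snd bin_digit_measurable]
  by (cases "even j") (simp_all add: interleave_digits_def borel_prod[symmetric])

definition ternary_value :: "(nat \<Rightarrow> int) \<Rightarrow> real" where
  "ternary_value a = (\<Sum>j. 2 * real_of_int (a j) / 3 ^ Suc j)"

lemma sums_ternary_tail: "(\<lambda>i. 2 / 3 ^ Suc (i + n)) sums (1 / 3 ^ n :: real)"
proof -
  have "(\<lambda>i. 2 / 3 ^ Suc n * (1 / 3) ^ i) sums (2 / 3 ^ Suc n * (1 / (1 - 1 / 3)) :: real)"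
    by (intro sums_mult geometric_sums) simp
  then show ?thesis by (simp add: power_add field_simps)
qed

lemma digits_01_real: "\<forall>j. a j \<in> {0, 1} \<Longrightarrow> 0 \<le> real_of_int (a j) \<and> real_of_int (a j) \<le> 1"
  by (metis empty_iff insert_iff of_int_0 of_int_1 order_refl zero_le_one)

lemma summable_ternary_terms:
  assumes "\<forall>j. a j \<in> {0, 1}"
  shows "summable (\<lambda>j. 2 * real_of_int (a j) / 3 ^ Suc j)"
proof (rule summable_comparison_test)
  show "\<exists>N. \<forall>n\<ge>N. norm (2 * real_of_int (a n) / 3 ^ Suc n) \<le> 2 / 3 ^ Suc (n + 0)"
    using digits_01_real[OF assms] by (auto simp: field_simps)
qed (use sums_ternary_tail in \<open>rule sums_summable\<close>)

lemma ternary_value_range: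
  assumes "\<forall>j. a j \<in> {0, 1}"
  shows "ternary_value a \<in> {0..1}"
proof -
  have "0 \<le> ternary_value a" unfolding ternary_value_def
    using digits_01_real[OF assms] by (intro suminf_nonneg summable_ternary_terms assms) auto
  moreover have "ternary_value a \<le> (\<Sum>i. 2 / 3 ^ Suc (i + 0))" unfolding ternary_value_def
    using digits_01_real[OF assms] summable_ternary_terms[OF assms]
      sums_summable[OF sums_ternary_tail[of 0]]
    by (intro suminf_le) (auto simp: field_simps)
  ultimately show ?thesis using sums_unique[OF sums_ternary_tail[of 0]] by simp
qed

text \<open>Digits 0 and 2 in base 3 keep a gap: the first differing digit contributes
  2/3^(j+1), while all later ones together contribute at most 1/3^(j+1).\<close>

lemma ternary_value_diff_ge:
  assumes a: "\<forall>j. a j \<in> {0, 1}" and b: "\<forall>j. b j \<in> {0, 1}"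
    and eq: "\<forall>i<j. a i = b i" and ne: "a j \<noteq> b j"
  shows "1 / 3 ^ Suc j \<le> \<bar>ternary_value a - ternary_value b\<bar>"
proof -
  define d where "d i = 2 * real_of_int (a i) / 3 ^ Suc i - 2 * real_of_int (b i) / 3 ^ Suc i" for i
  have d_bound: "\<bar>d i\<bar> \<le> 2 / 3 ^ Suc i" for i
    using digits_01_real[OF a, of i] digits_01_real[OF b, of i] by (auto simp: d_def field_simps)
  have "ternary_value a - ternary_value b = suminf d"
    unfolding ternary_value_def d_def
    using summable_ternary_terms[OF a] summable_ternary_terms[OF b] by (rule suminf_diff)
  also have "\<dots> = (\<Sum>i. d (i + Suc j)) + (\<Sum>i<Suc j. d i)"
    unfolding d_def by (intro suminf_split_initial_segment summable_diff summable_ternary_terms a b)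
  also have "(\<Sum>i<Suc j. d i) = d j"
    using eq by (simp add: d_def)
  finally have split: "ternary_value a - ternary_value b = (\<Sum>i. d (i + Suc j)) + d j" .
  have d_tail: "\<bar>d (i + Suc j)\<bar> \<le> 2 / 3 ^ Suc (i + Suc j)" for i
    by (rule d_bound)
  have tail_summable: "summable (\<lambda>i. \<bar>d (i + Suc j)\<bar>)"
    by (rule summable_comparison_test[OF _ sums_summable[OF sums_ternary_tail[of "Suc j"]]])
      (use d_tail in auto)
  have "\<bar>\<Sum>i. d (i + Suc j)\<bar> \<le> (\<Sum>i. \<bar>d (i + Suc j)\<bar>)"
    by (rule summable_rabs[OF tail_summable])
  also have "\<dots> \<le> (\<Sum>i. 2 / 3 ^ Suc (i + Suc j))"
    using d_tail by (intro suminf_le tail_summable sums_summable[OF sums_ternary_tail])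
  also have "\<dots> = 1 / 3 ^ Suc j" by (rule sums_unique[OF sums_ternary_tail, symmetric])
  finally have "\<bar>\<Sum>i. d (i + Suc j)\<bar> \<le> 1 / 3 ^ Suc j" .
  moreover have "\<bar>d j\<bar> = 2 / 3 ^ Suc j"
    using a[rule_format, of j] b[rule_format, of j] ne by (auto simp: d_def)
  ultimately show ?thesis using split by linarith
qed

lemma ternary_value_close_imp_digits_eq:
  assumes a: "\<forall>j. a j \<in> {0, 1}" and b: "\<forall>j. b j \<in> {0, 1}"
    and close: "\<bar>ternary_value a - ternary_value b\<bar> < 1 / 3 ^ Suc N"
  shows "\<forall>j\<le>N. a j = b j"
proof (rule ccontr)
  assume "\<not> (\<forall>j\<le>N. a j = b j)"
  then obtain j0 where j0: "j0 \<le> N" "a j0 \<noteq> b j0" by auto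
  define j where "j = (LEAST j. a j \<noteq> b j)"
  have "a j \<noteq> b j" "j \<le> j0" "\<forall>i<j. a i = b i"
    using j0 LeastI[of "\<lambda>j. a j \<noteq> b j" j0] Least_le[of "\<lambda>j. a j \<noteq> b j" j0] not_less_Least
    by (auto simp: j_def)
  then have "1 / 3 ^ Suc j \<le> \<bar>ternary_value a - ternary_value b\<bar>"
    using ternary_value_diff_ge[OF a b] by blast
  moreover have "(1::real) / 3 ^ Suc N \<le> 1 / 3 ^ Suc j"
    using \<open>j \<le> j0\<close> j0 by (intro divide_left_mono power_increasing) auto
  ultimately show False using close by linarith
qed

definition square_code :: "real \<times> real \<Rightarrow> real" where
  "square_code q = ternary_value (interleave_digits q)"

definition quadrant_code :: "pt \<Rightarrow> real" where
  "quadrant_code p = square_code (squash (fst p), squash (snd p))"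

lemma interleave_digits_even: "interleave_digits q (2 * k) = bin_digit k (fst q)"
  and interleave_digits_odd: "interleave_digits q (Suc (2 * k)) = bin_digit k (snd q)"
  by (simp_all add: interleave_digits_def)

lemma square_code_close_imp_close:
  assumes "q \<in> {0..<1} \<times> {0..<1}" "q' \<in> {0..<1} \<times> {0..<1}"
    and close: "\<bar>square_code q - square_code q'\<bar> < 1 / 3 ^ Suc (2 * m)"
  shows "\<bar>fst q - fst q'\<bar> < 1 / 2 ^ m \<and> \<bar>snd q - snd q'\<bar> < 1 / 2 ^ m"
proof -
  have "\<lfloor>x\<rfloor> = 0" if "x \<in> {0..<1}" for x :: real
    using that by (simp add: floor_eq_iff)
  then have floors: "\<lfloor>fst q\<rfloor> = \<lfloor>fst q'\<rfloor>" "\<lfloor>snd q\<rfloor> = \<lfloor>snd q'\<rfloor>"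
    using assms(1,2) by (simp_all add: mem_Times_iff)
  have prefix: "\<forall>j\<le>2 * m. interleave_digits q j = interleave_digits q' j"
    by (rule ternary_value_close_imp_digits_eq[OF _ _ close[unfolded square_code_def]])
      (use interleave_digits_01 in blast)+
  have "\<forall>k<m. bin_digit k (fst q) = bin_digit k (fst q')"
    using prefix by (auto simp flip: interleave_digits_even)
  moreover have "\<forall>k<m. bin_digit k (snd q) = bin_digit k (snd q')"
    using prefix by (auto simp flip: interleave_digits_odd)
  ultimately have "\<lfloor>2 ^ m * fst q\<rfloor> = \<lfloor>2 ^ m * fst q'\<rfloor>" "\<lfloor>2 ^ m * snd q\<rfloor> = \<lfloor>2 ^ m * snd q'\<rfloor>"
    using floors floor_pow2_eq_if_bin_digits_eq by blast+
  then show ?thesis by (intro conjI abs_diff_less_if_floor_pow2_eq)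
qed

lemma inj_on_square_code: "inj_on square_code ({0..<1} \<times> {0..<1})"
proof (rule inj_onI)
  fix q q' assume q: "q \<in> {0..<1} \<times> {0..<1}" "q' \<in> {0..<1} \<times> {0..<1}"
    and eq: "square_code q = square_code q'"
  have small: "\<bar>fst q - fst q'\<bar> < e \<and> \<bar>snd q - snd q'\<bar> < e" if "e > 0" for e
  proof -
    obtain m where "(1 / 2) ^ m < e" using real_arch_pow_inv[OF \<open>e > 0\<close>, of "1 / 2"] by auto
    then show ?thesis
      using square_code_close_imp_close[OF q, of m] eq by (simp add: power_one_over)
  qed
  have "\<not> 0 < \<bar>fst q - fst q'\<bar>" "\<not> 0 < \<bar>snd q - snd q'\<bar>"
    using small[of "\<bar>fst q - fst q'\<bar>"] small[of "\<bar>snd q - snd q'\<bar>"] by auto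
  then show "q = q'" by (simp add: prod_eq_iff)
qed

lemma square_code_measurable [measurable]: "square_code \<in> borel_measurable borel"
proof (rule borel_measurable_LIMSEQ_real)
  let ?u = "\<lambda>n q. \<Sum>j<n. 2 * real_of_int (interleave_digits q j) / 3 ^ Suc j"
  show "?u n \<in> borel_measurable borel" for n
    by measurable
  show "(\<lambda>n. ?u n q) \<longlonglongrightarrow> square_code q" for q
    unfolding square_code_def ternary_value_def
    by (intro summable_LIMSEQ summable_ternary_terms) (use interleave_digits_01 in blast)
qed

lemma quadrant_code_measurable [measurable]: "quadrant_code \<in> borel_measurable borel"
proof -
  have "(\<lambda>p::pt. (squash (fst p), squash (snd p))) \<in> borel \<rightarrow>\<^sub>M borel"
    unfolding borel_prod[symmetric] by measurable
  then show ?thesis unfolding quadrant_code_def by measurable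
qed

lemma quadrant_code_range: "quadrant_code p \<in> {0..1}"
  unfolding quadrant_code_def square_code_def
  using interleave_digits_01 by (intro ternary_value_range) auto

lemma uniformly_continuous_imp_continuous_extension:
  fixes f :: "'a::{metric_space, second_countable_topology} \<Rightarrow> 'b::euclidean_space"
  assumes "uniformly_continuous_on S f"
  obtains h where "continuous_on UNIV h" "\<And>x. x \<in> S \<Longrightarrow> h x = f x"
proof -
  obtain g where g: "uniformly_continuous_on (closure S) g" "\<And>x. x \<in> S \<Longrightarrow> f x = g x"
    using uniformly_continuous_on_extension_on_closure[OF assms] by metis
  have "closedin (top_of_set UNIV) (closure S)" by simp
  from Dugundji[OF convex_UNIV UNIV_not_empty this uniformly_continuous_imp_continuous[OF g(1)]
      subset_UNIV]
  obtain h where "continuous_on UNIV h" "\<And>x. x \<in> closure S \<Longrightarrow> h x = g x"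
    by metis
  with g(2) closure_subset that show ?thesis by (metis subsetD)
qed

lemma uniformly_continuous_on_inv_square_code:
  defines "Q \<equiv> {0..<1::real} \<times> {0..<1::real}"
  shows "uniformly_continuous_on (square_code ` Q) (inv_into Q square_code)"
  unfolding uniformly_continuous_on_def
proof (intro allI impI)
  fix e :: real assume "e > 0"
  then obtain m where m: "(1 / 2) ^ m < e / 2" using real_arch_pow_inv[of "e / 2" "1 / 2"] by auto
  have "dist (inv_into Q square_code x') (inv_into Q square_code x) < e"
    if x: "x \<in> square_code ` Q" "x' \<in> square_code ` Q"
      and close: "dist x' x < 1 / 3 ^ Suc (2 * m)" for x x'
  proof -
    obtain q q' where q: "q \<in> Q" "q' \<in> Q" and x_eq: "x = square_code q" "x' = square_code q'"
      using x by blast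
    have "\<bar>fst q' - fst q\<bar> < 1 / 2 ^ m \<and> \<bar>snd q' - snd q\<bar> < 1 / 2 ^ m"
      using square_code_close_imp_close[of q' q m] q close by (simp add: Q_def x_eq dist_real_def)
    then have "dist (fst q') (fst q) < e / 2" "dist (snd q') (snd q) < e / 2"
      using m by (simp_all add: dist_real_def power_one_over)
    then have "dist q' q < e"
      using dist_Pair_Pair[of "fst q'" "snd q'" "fst q" "snd q"]
        sqrt_sum_squares_le_sum_abs[of "dist (fst q') (fst q)" "dist (snd q') (snd q)"]
      by simp
    then show ?thesis
      using q inv_into_f_f[OF inj_on_square_code] by (simp add: x_eq Q_def)
  qed
  then show "\<exists>d>0. \<forall>x\<in>square_code ` Q. \<forall>x'\<in>square_code ` Q.
      dist x' x < d \<longrightarrow> dist (inv_into Q square_code x') (inv_into Q square_code x) < e"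
    by (intro exI[of _ "1 / 3 ^ Suc (2 * m)"]) auto
qed

lemma exists_continuous_left_inverse_quadrant_code:
  obtains G :: "real \<Rightarrow> pt" where "continuous_on UNIV G" "\<And>p. G (quadrant_code p) = p"
proof -
  define Q where "Q = {0..<1::real} \<times> {0..<1::real}"
  obtain h where h: "continuous_on UNIV h" "\<And>x. x \<in> square_code ` Q \<Longrightarrow> h x = inv_into Q square_code x"
    using uniformly_continuous_imp_continuous_extension[OF uniformly_continuous_on_inv_square_code]
    unfolding Q_def by blast
  show ?thesis
  proof
    show "continuous_on UNIV (\<lambda>x. (unsquash (fst (h x)), unsquash (snd (h x))))"
      using continuous_on_unsquash h(1)
      by (intro continuous_on_Pair continuous_on_compose2[OF continuous_on_unsquash]
          continuous_on_fst continuous_on_snd) auto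
    fix p :: pt
    have "(squash (fst p), squash (snd p)) \<in> Q"
      using squash_range by (simp add: Q_def)
    then show "(\<lambda>x. (unsquash (fst (h x)), unsquash (snd (h x)))) (quadrant_code p) = p"
      using inv_into_f_f[OF inj_on_square_code]
      by (simp add: quadrant_code_def h(2) Q_def unsquash_squash)
  qed
qed

section \<open>Sequential compactness of measures of bounded mass on [0,1]\<close>

definition unit_measures :: "real \<Rightarrow> real measure set" where
  "unit_measures C = {\<nu>. sets \<nu> = sets borel \<and> emeasure \<nu> UNIV \<le> ennreal C \<and>
     emeasure \<nu> (UNIV - {0..1}) = 0}"

definition weak_conv_real :: "(nat \<Rightarrow> real measure) \<Rightarrow> real measure \<Rightarrow> bool" where
  "weak_conv_real \<nu>s \<nu> \<longleftrightarrow> (\<forall>g :: real \<Rightarrow> real. continuous_on UNIV g \<longrightarrow> bounded (range g) \<longrightarrow>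
     (\<lambda>n. \<integral>x. g x \<partial>\<nu>s n) \<longlonglongrightarrow> (\<integral>x. g x \<partial>\<nu>))"

lemma unit_measures_sets [measurable_cong]: "\<nu> \<in> unit_measures C \<Longrightarrow> sets \<nu> = sets borel"
  by (simp add: unit_measures_def)

lemma unit_measures_space: "\<nu> \<in> unit_measures C \<Longrightarrow> space \<nu> = UNIV"
  using sets_eq_imp_space_eq[OF unit_measures_sets] by simp

lemma unit_measures_finite: "\<nu> \<in> unit_measures C \<Longrightarrow> finite_measure \<nu>"
  by (rule finite_measureI) (auto simp: unit_measures_space unit_measures_def top_unique)

lemma unit_measures_AE: "\<nu> \<in> unit_measures C \<Longrightarrow> AE x in \<nu>. x \<in> {0..1}"
  by (rule AE_I'[of "UNIV - {0..1}"]) (auto simp: unit_measures_def null_sets_def)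

lemma unit_measures_measure_le: "\<nu> \<in> unit_measures C \<Longrightarrow> 0 \<le> C \<Longrightarrow> measure \<nu> UNIV \<le> C"
  unfolding measure_def unit_measures_def by (auto intro: enn2real_leI)

lemma unit_measures_emeasure: "\<nu> \<in> unit_measures C \<Longrightarrow> emeasure \<nu> UNIV = ennreal (measure \<nu> UNIV)"
  using finite_measure.emeasure_eq_measure[OF unit_measures_finite] .

definition clamp01 :: "real \<Rightarrow> real" where
  "clamp01 x = max 0 (min 1 x)"

lemma continuous_on_clamp01: "continuous_on UNIV clamp01"
  unfolding clamp01_def by (intro continuous_intros)

lemma clamp01_measurable [measurable]: "clamp01 \<in> borel_measurable borel"
  by (rule borel_measurable_continuous_onI[OF continuous_on_clamp01])

lemma clamp01_range: "clamp01 x \<in> {0..1}"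
  and clamp01_id: "x \<in> {0..1} \<Longrightarrow> clamp01 x = x"
  by (auto simp: clamp01_def)

lemma unit_measure_eq_mass_times_probability:
  assumes \<nu>: "\<nu> \<in> unit_measures C"
  shows "\<exists>P. prob_space P \<and> P \<in> unit_measures 1 \<and> (\<forall>g :: real \<Rightarrow> real.
    g \<in> borel_measurable borel \<longrightarrow> (\<integral>x. g x \<partial>\<nu>) = measure \<nu> UNIV * (\<integral>x. g x \<partial>P))"
proof (cases "measure \<nu> UNIV = 0")
  case True
  then have "emeasure \<nu> (space \<nu>) = 0"
    using unit_measures_emeasure[OF \<nu>] by (simp add: unit_measures_space[OF \<nu>])
  then have "AE x in \<nu>. False"
    using AE_iff_measurable[of "space \<nu>" \<nu> "\<lambda>x. False"] by simp
  then have "(\<integral>x. g x \<partial>\<nu>) = 0" for g :: "real \<Rightarrow> real"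
    by (intro integral_eq_zero_AE) (auto elim: eventually_mono)
  moreover have "return borel 0 \<in> unit_measures 1"
    by (simp add: unit_measures_def)
  ultimately show ?thesis
    using True by (intro exI[of _ "return borel 0"]) (auto intro: prob_space_return)
next
  case False
  define c where "c = measure \<nu> UNIV"
  have c: "c > 0" using False measure_nonneg[of \<nu> UNIV] unfolding c_def by linarith
  define P where "P = density \<nu> (\<lambda>_. ennreal (1 / c))"
  have emeasure_P: "emeasure P A = ennreal (1 / c) * emeasure \<nu> A" if "A \<in> sets borel" for A
    using that unfolding P_def
    by (simp add: emeasure_density unit_measures_sets[OF \<nu>] nn_integral_cmult_indicator)
  have "emeasure P (space P) = ennreal (1 / c) * ennreal c"
    using emeasure_P[of UNIV] unit_measures_emeasure[OF \<nu>] unit_measures_space[OF \<nu>]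
    by (simp add: P_def c_def)
  also have "\<dots> = 1" using c by (simp flip: ennreal_mult)
  finally have "prob_space P" by (rule prob_spaceI)
  moreover have "P \<in> unit_measures 1"
    using \<nu> emeasure_P[of "UNIV - {0..1}"] prob_space.emeasure_space_1[OF \<open>prob_space P\<close>]
    by (auto simp: unit_measures_def P_def unit_measures_space[OF \<nu>])
  moreover have "(\<integral>x. g x \<partial>\<nu>) = c * (\<integral>x. g x \<partial>P)" if "g \<in> borel_measurable borel" for g
    using c that unfolding P_def
    by (subst integral_density) (auto simp: measurable_cong_sets[OF unit_measures_sets[OF \<nu>] refl])
  ultimately show ?thesis by (auto simp: c_def)
qed

lemma tight_unit_probabilities:
  assumes P: "\<And>n. prob_space (P n)" "\<And>n. P n \<in> unit_measures 1"
  shows "tight P"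
proof -
  have "measure (P n) {-1<..2} = 1" for n
  proof -
    interpret prob_space "P n" by (rule P)
    have "AE x in P n. x \<in> {-1<..2::real}"
      using unit_measures_AE[OF P(2)] by (rule eventually_mono) auto
    then show ?thesis by (subst (asm) AE_in_set_eq_1) (auto simp: unit_measures_sets[OF P(2)])
  qed
  moreover have "real_distribution (P n)" for n
    using P(1) unit_measures_sets[OF P(2)]
    by (simp add: real_distribution_def real_distribution_axioms_def)
  ultimately show ?thesis unfolding tight_def
    by (intro conjI allI impI exI[of _ "-1"] exI[of _ 2]) auto
qed

lemma integral_clamp01_unit_measure:
  fixes g :: "real \<Rightarrow> real"
  assumes \<nu>: "\<nu> \<in> unit_measures C" and g: "g \<in> borel_measurable borel"
  shows "(\<integral>x. g (clamp01 x) \<partial>\<nu>) = (\<integral>x. g x \<partial>\<nu>)"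
proof (rule integral_cong_AE)
  show "(\<lambda>x. g (clamp01 x)) \<in> borel_measurable \<nu>" "g \<in> borel_measurable \<nu>"
    using g measurable_compose[OF clamp01_measurable g]
    by (simp_all add: measurable_cong_sets[OF unit_measures_sets[OF \<nu>] refl])
  show "AE x in \<nu>. g (clamp01 x) = g x"
    using unit_measures_AE[OF \<nu>] by (rule eventually_mono) (simp add: clamp01_id)
qed

text \<open>Helly's selection theorem. Composing with clamp01 moves the limit onto [0,1] without
  changing any integral against the approximating measures, which live on [0,1].\<close>

lemma unit_probabilities_convergent_subseq:
  fixes P :: "nat \<Rightarrow> real measure"
  assumes P: "\<And>n. prob_space (P n)" "\<And>n. P n \<in> unit_measures 1"
  obtains r Q where "strict_mono r" "prob_space Q" "Q \<in> unit_measures 1" "weak_conv_real (P \<circ> r) Q"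
proof -
  have P_distr: "real_distribution (P n)" for n
    using P(1) unit_measures_sets[OF P(2)]
    by (simp add: real_distribution_def real_distribution_axioms_def)
  from tight_unit_probabilities[OF P] have "tight P" .
  then obtain r M where r: "strict_mono r" and M: "real_distribution M" and conv: "weak_conv_m (P \<circ> r) M"
    using tight_imp_convergent_subsubsequence[of P id] by (auto simp: strict_mono_id)
  interpret M: real_distribution M by (rule M)
  define Q where "Q = distr M borel clamp01"
  have clamp_M: "clamp01 \<in> measurable M borel"
    by (simp add: measurable_cong_sets[OF M.events_eq_borel refl])
  have "prob_space Q" unfolding Q_def by (rule M.prob_space_distr[OF clamp_M])
  moreover have "clamp01 -` (UNIV - {0..1}) = {}"
    using clamp01_range by auto
  then have "Q \<in> unit_measures 1"
    using clamp_M M.emeasure_space_1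
    by (auto simp: Q_def unit_measures_def emeasure_distr)
  moreover have "weak_conv_real (P \<circ> r) Q"
    unfolding weak_conv_real_def
  proof (intro allI impI)
    fix g :: "real \<Rightarrow> real" assume g: "continuous_on UNIV g" "bounded (range g)"
    then obtain B where B: "\<And>x. norm (g x) \<le> B" by (auto simp: bounded_iff)
    have g_meas: "g \<in> borel_measurable borel" by (rule borel_measurable_continuous_onI[OF g(1)])
    have "continuous_on UNIV (g \<circ> clamp01)"
      using continuous_on_compose[OF continuous_on_clamp01 continuous_on_subset[OF g(1)]] by simp
    then have "(\<lambda>n. \<integral>x. g (clamp01 x) \<partial>(P \<circ> r) n) \<longlonglongrightarrow> (\<integral>x. g (clamp01 x) \<partial>M)"
      using P_distr M conv B
      by (intro weak_conv_imp_integral_bdd_continuous_conv[where B = B])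
        (auto simp: continuous_on_eq_continuous_at comp_def)
    moreover have "(\<integral>x. g (clamp01 x) \<partial>P n) = (\<integral>x. g x \<partial>P n)" for n
      by (rule integral_clamp01_unit_measure[OF P(2) g_meas])
    moreover have "(\<integral>x. g (clamp01 x) \<partial>M) = (\<integral>x. g x \<partial>Q)"
      unfolding Q_def by (rule integral_distr[symmetric, OF clamp_M g_meas])
    ultimately show "(\<lambda>n. \<integral>x. g x \<partial>(P \<circ> r) n) \<longlonglongrightarrow> (\<integral>x. g x \<partial>Q)" by simp
  qed
  ultimately show ?thesis using r that by blast
qed

lemma density_const_unit_measure:
  assumes Q: "prob_space Q" "Q \<in> unit_measures 1" and c: "c \<in> {0..C}"
  shows "density Q (\<lambda>_. ennreal c) \<in> unit_measures C"
proof -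
  have emeasure_density: "emeasure (density Q (\<lambda>_. ennreal c)) A = ennreal c * emeasure Q A"
    if "A \<in> sets borel" for A
    using that unit_measures_sets[OF Q(2)] by (simp add: emeasure_density nn_integral_cmult_indicator)
  have "emeasure Q UNIV = 1"
    using prob_space.emeasure_space_1[OF Q(1)] unit_measures_space[OF Q(2)] by simp
  then have "emeasure (density Q (\<lambda>_. ennreal c)) UNIV = ennreal c"
    using emeasure_density[of UNIV] by simp
  moreover have "emeasure (density Q (\<lambda>_. ennreal c)) (UNIV - {0..1}) = 0"
    using emeasure_density[of "UNIV - {0..1}"] Q(2) by (simp add: unit_measures_def)
  ultimately show ?thesis
    using c by (simp add: unit_measures_def unit_measures_sets[OF Q(2)])
qed

lemma unit_measures_convergent_subseq:
  fixes \<nu> :: "nat \<Rightarrow> real measure"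
  assumes C: "0 \<le> C" and \<nu>: "\<And>n. \<nu> n \<in> unit_measures C"
  obtains r \<nu>0 where "strict_mono r" "\<nu>0 \<in> unit_measures C" "weak_conv_real (\<nu> \<circ> r) \<nu>0"
proof -
  define c where "c n = measure (\<nu> n) UNIV" for n
  have "\<forall>n. \<exists>P. prob_space P \<and> P \<in> unit_measures 1 \<and> (\<forall>g :: real \<Rightarrow> real.
      g \<in> borel_measurable borel \<longrightarrow> (\<integral>x. g x \<partial>\<nu> n) = c n * (\<integral>x. g x \<partial>P))"
    unfolding c_def using unit_measure_eq_mass_times_probability[OF \<nu>] by blast
  then obtain P where P_all: "\<forall>n. prob_space (P n) \<and> P n \<in> unit_measures 1 \<and> (\<forall>g :: real \<Rightarrow> real.
      g \<in> borel_measurable borel \<longrightarrow> (\<integral>x. g x \<partial>\<nu> n) = c n * (\<integral>x. g x \<partial>P n))"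
    by (rule choice[THEN exE])
  then have P: "\<And>n. prob_space (P n)" "\<And>n. P n \<in> unit_measures 1"
    and integral_\<nu>: "\<And>n g. g \<in> borel_measurable borel \<Longrightarrow> (\<integral>x. g x \<partial>\<nu> n) = c n * (\<integral>x. g x \<partial>P n)"
    by simp_all
  have "c n \<in> {0..C}" for n
    using unit_measures_measure_le[OF \<nu> C] by (simp add: c_def)
  then obtain c0 r1 where c0: "c0 \<in> {0..C}" and r1: "strict_mono r1" and c_lim: "(c \<circ> r1) \<longlonglongrightarrow> c0"
    using compact_imp_seq_compact[OF compact_Icc[of 0 C]] unfolding seq_compact_def by metis
  obtain r2 Q where r2: "strict_mono r2" and Q: "prob_space Q" "Q \<in> unit_measures 1"
    and P_lim: "weak_conv_real (P \<circ> r1 \<circ> r2) Q"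
    using unit_probabilities_convergent_subseq[of "P \<circ> r1"] P by (auto simp: comp_assoc)
  define \<nu>0 where "\<nu>0 = density Q (\<lambda>_. ennreal c0)"
  have "\<nu>0 \<in> unit_measures C"
    unfolding \<nu>0_def by (rule density_const_unit_measure[OF Q c0])
  moreover have "weak_conv_real (\<nu> \<circ> (r1 \<circ> r2)) \<nu>0"
    unfolding weak_conv_real_def
  proof (intro allI impI)
    fix g :: "real \<Rightarrow> real" assume g: "continuous_on UNIV g" "bounded (range g)"
    have g_meas: "g \<in> borel_measurable borel" by (rule borel_measurable_continuous_onI[OF g(1)])
    have "(\<lambda>n. c (r1 (r2 n))) \<longlonglongrightarrow> c0"
      using LIMSEQ_subseq_LIMSEQ[OF c_lim r2] by (simp add: comp_def)
    moreover have "(\<lambda>n. \<integral>x. g x \<partial>P (r1 (r2 n))) \<longlonglongrightarrow> (\<integral>x. g x \<partial>Q)"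
      using P_lim g unfolding weak_conv_real_def comp_def by blast
    ultimately have "(\<lambda>n. c (r1 (r2 n)) * (\<integral>x. g x \<partial>P (r1 (r2 n)))) \<longlonglongrightarrow> c0 * (\<integral>x. g x \<partial>Q)"
      by (rule tendsto_mult)
    moreover have "(\<integral>x. g x \<partial>\<nu>0) = (\<integral>x. c0 *\<^sub>R g x \<partial>Q)"
      unfolding \<nu>0_def using c0 g_meas
      by (intro integral_density) (simp_all add: measurable_cong_sets[OF unit_measures_sets[OF Q(2)] refl])
    ultimately show "(\<lambda>n. \<integral>x. g x \<partial>(\<nu> \<circ> (r1 \<circ> r2)) n) \<longlonglongrightarrow> (\<integral>x. g x \<partial>\<nu>0)"
      by (simp add: integral_\<nu>[OF g_meas] comp_def)
  qed
  ultimately show ?thesis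
    using that strict_mono_o[OF r1 r2] by blast
qed

section \<open>Compactness of the measures of bounded mass\<close>

definition rat_bernstein :: "nat \<times> rat list \<Rightarrow> real \<Rightarrow> real" where
  "rat_bernstein i x = (\<Sum>k\<le>fst i. real_of_rat (snd i ! k) * Bernstein (fst i) k (clamp01 x))"

lemma continuous_on_rat_bernstein: "continuous_on UNIV (rat_bernstein i)"
  unfolding rat_bernstein_def Bernstein_def
  by (intro continuous_intros continuous_on_compose2[OF _ continuous_on_clamp01]) auto

lemma rat_bernstein_measurable [measurable]: "rat_bernstein i \<in> borel_measurable borel"
  by (rule borel_measurable_continuous_onI[OF continuous_on_rat_bernstein])

lemma bounded_range_rat_bernstein: "bounded (range (rat_bernstein i))"
proof -
  define p where "p y = (\<Sum>k\<le>fst i. real_of_rat (snd i ! k) * Bernstein (fst i) k y)" for y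
  have "continuous_on {0..1} p" unfolding p_def Bernstein_def by (intro continuous_intros)
  then have "bounded (p ` {0..1})" by (intro compact_imp_bounded compact_continuous_image) auto
  moreover have "range (rat_bernstein i) \<subseteq> p ` {0..1}"
    using clamp01_range by (auto simp: rat_bernstein_def p_def[symmetric])
  ultimately show ?thesis by (rule bounded_subset)
qed

lemma exists_rat_between: "x < y \<Longrightarrow> \<exists>q. x < real_of_rat q \<and> real_of_rat q < y"
  using Rats_dense_in_real[of x y] by (auto elim!: Rats_cases)

text \<open>Rounding the node values of a Bernstein approximant to rationals costs at most the
  rounding error, because the Bernstein basis polynomials are nonnegative and sum to 1.\<close>

lemma rat_bernstein_approx:
  assumes g: "continuous_on {0..1} g" and e: "0 < e"
  shows "\<exists>i. \<forall>x\<in>{0..1}. \<bar>g x - rat_bernstein i x\<bar> < e"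
proof -
  obtain N where N: "\<And>x. x \<in> {0..1} \<Longrightarrow> \<bar>g x - (\<Sum>k\<le>N. g (k / N) * Bernstein N k x)\<bar> < e / 2"
    using Bernstein_Weierstrass[OF g, of "e / 2"] e by auto
  have "\<forall>k::nat. \<exists>q. \<bar>real_of_rat q - g (k / N)\<bar> < e / 2"
  proof
    fix k :: nat
    obtain r where "g (k / N) - e / 2 < real_of_rat r" "real_of_rat r < g (k / N) + e / 2"
      using exists_rat_between[of "g (k / N) - e / 2" "g (k / N) + e / 2"] e by auto
    then show "\<exists>q. \<bar>real_of_rat q - g (k / N)\<bar> < e / 2"
      unfolding abs_less_iff by (intro exI[of _ r]) linarith
  qed
  then obtain q where q: "\<forall>k::nat. \<bar>real_of_rat (q k) - g (k / N)\<bar> < e / 2"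
    by (rule choice[THEN exE])
  define i where "i = (N, map q [0..<Suc N])"
  have "\<bar>g x - rat_bernstein i x\<bar> < e" if x: "x \<in> {0..1}" for x
  proof -
    have B: "0 \<le> Bernstein N k x" for k using x by (simp add: Bernstein_nonneg)
    have "rat_bernstein i x = (\<Sum>k\<le>N. real_of_rat (q k) * Bernstein N k x)"
      unfolding rat_bernstein_def i_def using x
      by (auto simp: clamp01_id simp del: upt_Suc intro!: sum.cong)
    then have "\<bar>(\<Sum>k\<le>N. g (k / N) * Bernstein N k x) - rat_bernstein i x\<bar>
        = \<bar>\<Sum>k\<le>N. (g (k / N) - real_of_rat (q k)) * Bernstein N k x\<bar>"
      by (simp add: sum_subtractf left_diff_distrib)
    also have "\<dots> \<le> (\<Sum>k\<le>N. e / 2 * Bernstein N k x)"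
    proof (intro order_trans[OF sum_abs] sum_mono)
      fix k
      have qk: "\<bar>g (k / N) - real_of_rat (q k)\<bar> \<le> e / 2"
        using q by (simp add: abs_minus_commute less_imp_le)
      show "\<bar>(g (k / N) - real_of_rat (q k)) * Bernstein N k x\<bar> \<le> e / 2 * Bernstein N k x"
        using mult_right_mono[OF qk B[of k]] by (simp add: abs_mult abs_of_nonneg[OF B[of k]])
    qed
    also have "\<dots> = e / 2 * (\<Sum>k\<le>N. Bernstein N k x)" by (rule sum_distrib_left[symmetric])
    also have "\<dots> = e / 2" by simp
    finally show ?thesis using N[OF x] by linarith
  qed
  then show ?thesis by blast
qed

lemma integral_diff_le_unit_measure:
  fixes g h :: "real \<Rightarrow> real"
  assumes \<nu>: "\<nu> \<in> unit_measures C" and C: "0 \<le> C"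
    and g: "g \<in> borel_measurable borel" "bounded (range g)"
    and h: "h \<in> borel_measurable borel" "bounded (range h)"
    and close: "\<And>x. x \<in> {0..1} \<Longrightarrow> \<bar>g x - h x\<bar> \<le> \<delta>" and "0 \<le> \<delta>"
  shows "\<bar>(\<integral>x. g x \<partial>\<nu>) - (\<integral>x. h x \<partial>\<nu>)\<bar> \<le> \<delta> * C"
proof -
  interpret finite_measure \<nu> by (rule unit_measures_finite[OF \<nu>])
  have integrable: "integrable \<nu> f"
    if f: "f \<in> borel_measurable borel" "bounded (range f)" for f :: "real \<Rightarrow> real"
  proof -
    obtain B where "\<And>x. norm (f x) \<le> B" using f(2) by (auto simp: bounded_iff)
    then show ?thesis using f(1)
      by (intro integrable_const_bound[where B = B])
        (auto simp: measurable_cong_sets[OF unit_measures_sets[OF \<nu>] refl])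
  qed
  have "\<bar>(\<integral>x. g x \<partial>\<nu>) - (\<integral>x. h x \<partial>\<nu>)\<bar> = \<bar>\<integral>x. g x - h x \<partial>\<nu>\<bar>"
    using integrable[OF g] integrable[OF h] by simp
  also have "\<dots> \<le> (\<integral>x. \<bar>g x - h x\<bar> \<partial>\<nu>)"
    using integral_norm_bound[of \<nu> "\<lambda>x. g x - h x"] by simp
  also have "\<dots> \<le> (\<integral>x. \<delta> \<partial>\<nu>)"
    using integrable[OF g] integrable[OF h] unit_measures_AE[OF \<nu>] close
    by (intro integral_mono_AE) (auto elim: eventually_mono)
  also have "\<dots> = \<delta> * measure \<nu> UNIV"
    using unit_measures_space[OF \<nu>] by simp
  also have "\<dots> \<le> \<delta> * C"
    using unit_measures_measure_le[OF \<nu> C] \<open>0 \<le> \<delta>\<close> by (intro mult_left_mono)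
  finally show ?thesis .
qed

text \<open>Neighbourhoods are indexed by finite lists of (polynomial, rational lower bound, rational
  upper bound); the index type is countable, which is all the compactness proof needs.\<close>

definition bernstein_nbhd :: "real \<Rightarrow> ((nat \<times> rat list) \<times> rat \<times> rat) list \<Rightarrow> real measure set" where
  "bernstein_nbhd C L = {\<nu> \<in> unit_measures C. \<forall>(i, a, b) \<in> set L.
     real_of_rat a < (\<integral>x. rat_bernstein i x \<partial>\<nu>) \<and> (\<integral>x. rat_bernstein i x \<partial>\<nu>) < real_of_rat b}"

lemma bernstein_nbhd_append: "bernstein_nbhd C (L1 @ L2) = bernstein_nbhd C L1 \<inter> bernstein_nbhd C L2"
  unfolding bernstein_nbhd_def set_append ball_Un by blast

lemma bernstein_nbhd_integral_close:
  fixes g :: "real \<Rightarrow> real"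
  assumes C: "0 \<le> C" and \<nu>: "\<nu> \<in> unit_measures C"
    and g: "continuous_on UNIV g" "bounded (range g)" and e: "0 < e"
  shows "\<exists>L. \<nu> \<in> bernstein_nbhd C L \<and>
    (\<forall>\<nu>'\<in>bernstein_nbhd C L. \<bar>(\<integral>x. g x \<partial>\<nu>') - (\<integral>x. g x \<partial>\<nu>)\<bar> < e)"
proof -
  define \<delta> where "\<delta> = e / (4 * (C + 1))"
  have \<delta>: "0 < \<delta>" "\<delta> * C < e / 4" using e C by (simp_all add: \<delta>_def field_simps)
  obtain i where i: "\<forall>x\<in>{0..1}. \<bar>g x - rat_bernstein i x\<bar> < \<delta>"
    using rat_bernstein_approx[OF continuous_on_subset[OF g(1)] \<delta>(1)] by blast
  have approx: "\<bar>(\<integral>x. g x \<partial>\<nu>') - (\<integral>x. rat_bernstein i x \<partial>\<nu>')\<bar> < e / 4"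
    if "\<nu>' \<in> unit_measures C" for \<nu>'
  proof -
    have "\<bar>(\<integral>x. g x \<partial>\<nu>') - (\<integral>x. rat_bernstein i x \<partial>\<nu>')\<bar> \<le> \<delta> * C"
      using i \<delta>(1)
      by (intro integral_diff_le_unit_measure[OF that C borel_measurable_continuous_onI[OF g(1)] g(2)
          rat_bernstein_measurable bounded_range_rat_bernstein]) (auto intro: less_imp_le)
    then show ?thesis using \<delta>(2) by linarith
  qed
  define z where "z = (\<integral>x. rat_bernstein i x \<partial>\<nu>)"
  obtain a b where a: "z - e / 4 < real_of_rat a" "real_of_rat a < z"
    and b: "z < real_of_rat b" "real_of_rat b < z + e / 4"
    using exists_rat_between[of "z - e / 4" z] exists_rat_between[of z "z + e / 4"] e by auto
  have "\<nu> \<in> bernstein_nbhd C [(i, a, b)]"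
    using \<nu> a b by (simp add: bernstein_nbhd_def z_def)
  moreover have "\<bar>(\<integral>x. g x \<partial>\<nu>') - (\<integral>x. g x \<partial>\<nu>)\<bar> < e" if "\<nu>' \<in> bernstein_nbhd C [(i, a, b)]" for \<nu>'
    using that approx[of \<nu>'] approx[OF \<nu>] a b
    unfolding bernstein_nbhd_def z_def abs_less_iff by auto
  ultimately show ?thesis by blast
qed

lemma weak_conv_real_eventually_in_bernstein_nbhd:
  assumes conv: "weak_conv_real \<nu>s \<nu>0" and \<nu>s: "\<And>n. \<nu>s n \<in> unit_measures C"
    and \<nu>0: "\<nu>0 \<in> bernstein_nbhd C L"
  shows "eventually (\<lambda>n. \<nu>s n \<in> bernstein_nbhd C L) sequentially"
proof -
  have "eventually (\<lambda>n. real_of_rat a < (\<integral>x. rat_bernstein i x \<partial>\<nu>s n) \<and>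
      (\<integral>x. rat_bernstein i x \<partial>\<nu>s n) < real_of_rat b) sequentially"
    if "(i, a, b) \<in> set L" for i a b
  proof -
    have "(\<lambda>n. \<integral>x. rat_bernstein i x \<partial>\<nu>s n) \<longlonglongrightarrow> (\<integral>x. rat_bernstein i x \<partial>\<nu>0)"
      using conv continuous_on_rat_bernstein bounded_range_rat_bernstein
      unfolding weak_conv_real_def by blast
    moreover have "real_of_rat a < (\<integral>x. rat_bernstein i x \<partial>\<nu>0)" "(\<integral>x. rat_bernstein i x \<partial>\<nu>0) < real_of_rat b"
      using \<nu>0 that unfolding bernstein_nbhd_def by auto
    ultimately show ?thesis
      by (intro eventually_conj order_tendstoD)
  qed
  then have "eventually (\<lambda>n. \<forall>(i, a, b) \<in> set L. real_of_rat a < (\<integral>x. rat_bernstein i x \<partial>\<nu>s n) \<and>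
      (\<integral>x. rat_bernstein i x \<partial>\<nu>s n) < real_of_rat b) sequentially"
    by (subst eventually_ball_finite_distrib) auto
  then show ?thesis
    using \<nu>s unfolding bernstein_nbhd_def by (auto elim: eventually_mono)
qed

lemma topspace_weak_top: "topspace weak_top = M1"
proof -
  have "bcont (\<lambda>_. 0)" by (simp add: bcont_def)
  then have "M1 \<in> {{M \<in> M1. (\<integral>p. f p \<partial>M) \<in> U} | f U. bcont f \<and> open U}"
    by (intro CollectI exI[of _ "\<lambda>_. 0"] exI[of _ UNIV]) auto
  then show ?thesis unfolding weak_top_def topology_generated_by_topspace by blast
qed

lemma openin_weak_top_integral_preimage:
  "bcont f \<Longrightarrow> open U \<Longrightarrow> openin weak_top {M \<in> M1. (\<integral>p. f p \<partial>M) \<in> U}"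
  unfolding weak_top_def openin_topology_generated_by_iff by (rule generate_topology_on.Basis) blast

lemma continuous_map_weak_top_total_mass:
  fixes h :: "real \<Rightarrow> real"
  assumes "continuous_on UNIV h"
  shows "continuous_map weak_top euclideanreal (\<lambda>M. h (\<integral>p. 1 \<partial>M))"
  unfolding continuous_map_def
proof (intro conjI allI impI)
  fix U :: "real set" assume "openin euclideanreal U"
  then have "open (h -` U)" using open_vimage[OF _ assms] by simp
  moreover have "bcont (\<lambda>_. 1)" by (simp add: bcont_def)
  moreover have "{M \<in> topspace weak_top. h (\<integral>p. 1 \<partial>M) \<in> U} = {M \<in> M1. (\<integral>p. 1 \<partial>M) \<in> h -` U}"
    by (auto simp: topspace_weak_top)
  ultimately show "openin weak_top {M \<in> topspace weak_top. h (\<integral>p. 1 \<partial>M) \<in> U}"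
    using openin_weak_top_integral_preimage[of "\<lambda>_. 1" "h -` U"] by simp
qed simp

lemma
  fixes G :: "real \<Rightarrow> pt" and f :: "pt \<Rightarrow> real"
  assumes G: "continuous_on UNIV G" and \<nu>: "\<nu> \<in> unit_measures C"
  shows emeasure_distr_unit_measure: "emeasure (distr \<nu> borel G) UNIV = emeasure \<nu> UNIV"
    and distr_unit_measure_M1: "distr \<nu> borel G \<in> M1"
    and integral_distr_unit_measure:
      "f \<in> borel_measurable borel \<Longrightarrow> (\<integral>p. f p \<partial>distr \<nu> borel G) = (\<integral>x. f (G x) \<partial>\<nu>)"
proof -
  have G_meas: "G \<in> measurable \<nu> borel"
    using borel_measurable_continuous_onI[OF G]
    by (simp add: measurable_cong_sets[OF unit_measures_sets[OF \<nu>] refl])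
  then show mass: "emeasure (distr \<nu> borel G) UNIV = emeasure \<nu> UNIV"
    using unit_measures_space[OF \<nu>] by (simp add: emeasure_distr)
  have "emeasure \<nu> UNIV < \<infinity>"
    using \<nu> unfolding unit_measures_def by (auto intro: le_less_trans[OF _ ennreal_less_top])
  then show "distr \<nu> borel G \<in> M1"
    using mass by (simp add: M1_def)
  show "f \<in> borel_measurable borel \<Longrightarrow> (\<integral>p. f p \<partial>distr \<nu> borel G) = (\<integral>x. f (G x) \<partial>\<nu>)"
    by (rule integral_distr[OF G_meas])
qed

lemma bernstein_nbhd_subset: "bernstein_nbhd C L \<subseteq> unit_measures C"
  unfolding bernstein_nbhd_def by blast

lemma weak_top_open_contains_bernstein_nbhd:
  fixes G :: "real \<Rightarrow> pt"
  assumes G: "continuous_on UNIV G" and C: "0 \<le> C" and U: "openin weak_top U"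
    and \<nu>: "\<nu> \<in> unit_measures C" "distr \<nu> borel G \<in> U"
  shows "\<exists>L. \<nu> \<in> bernstein_nbhd C L \<and> (\<forall>\<nu>'\<in>bernstein_nbhd C L. distr \<nu>' borel G \<in> U)"
proof -
  have "generate_topology_on {{M \<in> M1. (\<integral>p. f p \<partial>M) \<in> V} | f V. bcont f \<and> open V} U"
    using U by (simp add: weak_top_def openin_topology_generated_by_iff)
  then show ?thesis using \<nu>
  proof (induction arbitrary: \<nu>)
    case (Int a b)
    then obtain L1 L2 where "\<nu> \<in> bernstein_nbhd C L1" "\<forall>\<nu>'\<in>bernstein_nbhd C L1. distr \<nu>' borel G \<in> a"
      "\<nu> \<in> bernstein_nbhd C L2" "\<forall>\<nu>'\<in>bernstein_nbhd C L2. distr \<nu>' borel G \<in> b"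
      by blast
    then show ?case by (intro exI[of _ "L1 @ L2"]) (simp add: bernstein_nbhd_append)
  next
    case (UN K)
    then obtain k where "k \<in> K" "distr \<nu> borel G \<in> k" by blast
    with UN show ?case by blast
  next
    case (Basis s)
    then obtain f V where s: "s = {M \<in> M1. (\<integral>p. f p \<partial>M) \<in> V}" and f: "bcont f" and V: "open V"
      by blast
    have f_meas: "f \<in> borel_measurable borel"
      using f by (simp add: bcont_def borel_measurable_continuous_onI)
    have g: "continuous_on UNIV (f \<circ> G)" "bounded (range (f \<circ> G))"
      using f continuous_on_compose[OF G continuous_on_subset[of UNIV f]]
      by (auto simp: bcont_def image_comp[symmetric] intro: bounded_subset)
    have "(\<integral>x. f (G x) \<partial>\<nu>) \<in> V"
      using Basis.prems s integral_distr_unit_measure[OF G _ f_meas] by simp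
    then obtain e where e: "e > 0" "ball (\<integral>x. f (G x) \<partial>\<nu>) e \<subseteq> V"
      using V by (auto elim: openE)
    obtain L where L: "\<nu> \<in> bernstein_nbhd C L"
      and close: "\<forall>\<nu>'\<in>bernstein_nbhd C L. \<bar>(\<integral>x. f (G x) \<partial>\<nu>') - (\<integral>x. f (G x) \<partial>\<nu>)\<bar> < e"
      using bernstein_nbhd_integral_close[OF C Basis.prems(1) g e(1)] by auto
    have "distr \<nu>' borel G \<in> s" if "\<nu>' \<in> bernstein_nbhd C L" for \<nu>'
    proof -
      have \<nu>': "\<nu>' \<in> unit_measures C" using that bernstein_nbhd_subset by blast
      have "(\<integral>x. f (G x) \<partial>\<nu>') \<in> V"
        using close that e(2) by (auto simp: dist_real_def abs_minus_commute)
      then show ?thesis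
        using s distr_unit_measure_M1[OF G \<nu>'] integral_distr_unit_measure[OF G \<nu>' f_meas] by simp
    qed
    with L show ?case by blast
  qed simp
qed

lemma bernstein_nbhd_countable_refinement:
  fixes G :: "real \<Rightarrow> pt"
  assumes G: "continuous_on UNIV G" and C: "0 \<le> C" and \<U>: "\<forall>U\<in>\<U>. openin weak_top U"
    and cover: "(\<lambda>\<nu>. distr \<nu> borel G) ` unit_measures C \<subseteq> \<Union>\<U>"
  shows "\<exists>U (L :: nat \<Rightarrow> ((nat \<times> rat list) \<times> rat \<times> rat) list). (\<forall>k. U k \<in> \<U>) \<and>
    (\<forall>k. \<forall>\<nu>'\<in>bernstein_nbhd C (L k). distr \<nu>' borel G \<in> U k) \<and>
    (\<forall>\<nu>\<in>unit_measures C. \<exists>k. \<nu> \<in> bernstein_nbhd C (L k))"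
proof -
  define V where "V = {L. \<exists>U\<in>\<U>. \<forall>\<nu>'\<in>bernstein_nbhd C L. distr \<nu>' borel G \<in> U}"
  have V_cover: "\<exists>L\<in>V. \<nu> \<in> bernstein_nbhd C L" if \<nu>: "\<nu> \<in> unit_measures C" for \<nu>
  proof -
    obtain U where U: "U \<in> \<U>" "distr \<nu> borel G \<in> U" using cover \<nu> by blast
    from weak_top_open_contains_bernstein_nbhd[OF G C _ \<nu> U(2)] \<U> U(1)
    obtain L where "\<nu> \<in> bernstein_nbhd C L" "\<forall>\<nu>'\<in>bernstein_nbhd C L. distr \<nu>' borel G \<in> U"
      by blast
    with U(1) show ?thesis unfolding V_def by blast
  qed
  obtain Uf where Uf: "\<And>L. L \<in> V \<Longrightarrow> Uf L \<in> \<U> \<and> (\<forall>\<nu>'\<in>bernstein_nbhd C L. distr \<nu>' borel G \<in> Uf L)"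
    using bchoice[of V "\<lambda>L U. U \<in> \<U> \<and> (\<forall>\<nu>'\<in>bernstein_nbhd C L. distr \<nu>' borel G \<in> U)"]
    by (auto simp: V_def)
  have "null_measure borel \<in> unit_measures C" using C by (simp add: unit_measures_def)
  then have "V \<noteq> {}" using V_cover by blast
  define L where "L = from_nat_into V"
  have L: "L k \<in> V" for k unfolding L_def using \<open>V \<noteq> {}\<close> by (rule from_nat_into)
  have L_onto: "range L = V" unfolding L_def using \<open>V \<noteq> {}\<close> by simp
  have "\<exists>k. \<nu> \<in> bernstein_nbhd C (L k)" if "\<nu> \<in> unit_measures C" for \<nu>
    using V_cover[OF that] unfolding L_onto[symmetric] by blast
  with Uf[OF L] show ?thesis
    by (intro exI[of _ "Uf \<circ> L"] exI[of _ L]) auto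
qed

text \<open>Sequential compactness along the countable refinement: a sequence escaping the first n
  members has a convergent subsequence, whose limit lies in some member that the subsequence
  eventually enters.\<close>

lemma compactin_distr_unit_measures:
  fixes G :: "real \<Rightarrow> pt"
  assumes G: "continuous_on UNIV G" and C: "0 \<le> C"
  shows "compactin weak_top ((\<lambda>\<nu>. distr \<nu> borel G) ` unit_measures C)"
  unfolding compactin_def
proof (intro conjI allI impI)
  show "(\<lambda>\<nu>. distr \<nu> borel G) ` unit_measures C \<subseteq> topspace weak_top"
    using distr_unit_measure_M1[OF G] by (auto simp: topspace_weak_top)
  fix \<U> assume \<U>: "(\<forall>U\<in>\<U>. openin weak_top U) \<and> (\<lambda>\<nu>. distr \<nu> borel G) ` unit_measures C \<subseteq> \<Union>\<U>"
  obtain U and L :: "nat \<Rightarrow> ((nat \<times> rat list) \<times> rat \<times> rat) list"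
    where U: "\<forall>k. U k \<in> \<U>" "\<forall>k. \<forall>\<nu>'\<in>bernstein_nbhd C (L k). distr \<nu>' borel G \<in> U k"
      and L: "\<forall>\<nu>\<in>unit_measures C. \<exists>k. \<nu> \<in> bernstein_nbhd C (L k)"
    using bernstein_nbhd_countable_refinement[OF G C \<U>[THEN conjunct1] \<U>[THEN conjunct2]] by blast
  show "\<exists>\<F>. finite \<F> \<and> \<F> \<subseteq> \<U> \<and> (\<lambda>\<nu>. distr \<nu> borel G) ` unit_measures C \<subseteq> \<Union>\<F>"
  proof (rule ccontr)
    assume no_finite_subcover: "\<not> ?thesis"
    have "\<forall>n. \<exists>\<nu>. \<nu> \<in> unit_measures C \<and> distr \<nu> borel G \<notin> \<Union>(U ` {..n})"
    proof
      fix n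
      have "finite (U ` {..n})" "U ` {..n} \<subseteq> \<U>" using U(1) by auto
      then have "\<not> (\<lambda>\<nu>. distr \<nu> borel G) ` unit_measures C \<subseteq> \<Union>(U ` {..n})"
        using no_finite_subcover by blast
      then show "\<exists>\<nu>. \<nu> \<in> unit_measures C \<and> distr \<nu> borel G \<notin> \<Union>(U ` {..n})"
        by blast
    qed
    then obtain \<nu>s where \<nu>s: "\<forall>n. \<nu>s n \<in> unit_measures C \<and> distr (\<nu>s n) borel G \<notin> \<Union>(U ` {..n})"
      by (rule choice[THEN exE])
    then have "\<nu>s n \<in> unit_measures C" for n by blast
    then obtain r \<nu>0 where r: "strict_mono r" and \<nu>0: "\<nu>0 \<in> unit_measures C"
      and conv: "weak_conv_real (\<nu>s \<circ> r) \<nu>0"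
      by (rule unit_measures_convergent_subseq[OF C])
    obtain k where k: "\<nu>0 \<in> bernstein_nbhd C (L k)"
      using L \<nu>0 by blast
    have "eventually (\<lambda>n. (\<nu>s \<circ> r) n \<in> bernstein_nbhd C (L k)) sequentially"
      by (rule weak_conv_real_eventually_in_bernstein_nbhd[OF conv _ k]) (use \<nu>s in auto)
    then obtain N where N: "\<And>n. n \<ge> N \<Longrightarrow> \<nu>s (r n) \<in> bernstein_nbhd C (L k)"
      unfolding eventually_sequentially by auto
    define n where "n = max N k"
    have "distr (\<nu>s (r n)) borel G \<in> U k"
      using N[of n] U(2) by (auto simp: n_def)
    moreover have "k \<le> r n"
      using seq_suble[OF r, of n] by (simp add: n_def)
    ultimately show False using \<nu>s by auto
  qed
qed

lemma compactin_mass_bounded: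
  assumes "0 \<le> C"
  shows "compactin weak_top {M \<in> M1. emeasure M (space M) \<le> ennreal C}"
proof -
  obtain G where G: "continuous_on UNIV G" and left_inverse: "\<And>p. G (quadrant_code p) = p"
    using exists_continuous_left_inverse_quadrant_code by blast
  have "{M \<in> M1. emeasure M (space M) \<le> ennreal C} = (\<lambda>\<nu>. distr \<nu> borel G) ` unit_measures C"
  proof (intro equalityI subsetI)
    fix M assume M: "M \<in> {M \<in> M1. emeasure M (space M) \<le> ennreal C}"
    then have sets_M: "sets M = sets borel" by (simp add: M1_def)
    have code_M: "quadrant_code \<in> measurable M borel"
      using quadrant_code_measurable by (simp add: measurable_cong_sets[OF sets_M refl])
    have "quadrant_code -` (UNIV - {0..1}) = {}"
      using quadrant_code_range by auto
    then have "distr M borel quadrant_code \<in> unit_measures C"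
      using M code_M sets_eq_imp_space_eq[OF sets_M]
      by (simp add: unit_measures_def emeasure_distr)
    moreover have "distr (distr M borel quadrant_code) borel G = M"
      using distr_distr[OF borel_measurable_continuous_onI[OF G] code_M] left_inverse
        distr_id2[OF sets_M[symmetric]] by (simp add: comp_def)
    ultimately show "M \<in> (\<lambda>\<nu>. distr \<nu> borel G) ` unit_measures C"
      by (intro image_eqI[of _ _ "distr M borel quadrant_code"]) simp_all
  next
    fix M assume "M \<in> (\<lambda>\<nu>. distr \<nu> borel G) ` unit_measures C"
    then obtain \<nu> where \<nu>: "\<nu> \<in> unit_measures C" "M = distr \<nu> borel G" by blast
    then show "M \<in> {M \<in> M1. emeasure M (space M) \<le> ennreal C}"
      using distr_unit_measure_M1[OF G \<nu>(1)] emeasure_distr_unit_measure[OF G \<nu>(1)]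
      by (simp add: unit_measures_def)
  qed
  then show ?thesis using compactin_distr_unit_measures[OF G assms] by simp
qed

section \<open>Mass of the fluid-scaled state\<close>

definition pos_count :: "pt set \<Rightarrow> pt list \<Rightarrow> nat" where
  "pos_count A ps = length (filter (\<lambda>p. p \<in> A \<and> 0 < fst p \<and> 0 < snd p) ps)"

lemma pos_count_Nil [simp]: "pos_count A [] = 0"
  and pos_count_Cons:
    "pos_count A (p # ps) = (if p \<in> A \<and> 0 < fst p \<and> 0 < snd p then 1 else 0) + pos_count A ps"
  by (auto simp: pos_count_def)

lemma pos_count_le_length: "pos_count A ps \<le> length ps"
  unfolding pos_count_def by (rule length_filter_le)

lemma suminf_pos_count:
  assumes "disjoint_family A"
  shows "(\<Sum>i. of_nat (pos_count (A i) ps) :: ennreal) = of_nat (pos_count (\<Union>i. A i) ps)"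
proof (induction ps)
  case (Cons p ps)
  let ?pos = "0 < fst p \<and> 0 < snd p"
  have "(\<Sum>i. (if p \<in> A i \<and> ?pos then 1 else 0) :: ennreal) = (if p \<in> (\<Union>i. A i) \<and> ?pos then 1 else 0)"
    using suminf_indicator[OF assms, of p] by (cases ?pos) (auto simp: indicator_def of_bool_def)
  moreover have "(\<Sum>i. (if p \<in> A i \<and> ?pos then 1 else 0) + (of_nat (pos_count (A i) ps) :: ennreal))
      = (\<Sum>i. (if p \<in> A i \<and> ?pos then 1 else 0) :: ennreal) + (\<Sum>i. of_nat (pos_count (A i) ps))"
    by (rule suminf_add[symmetric]) auto
  ultimately show ?case
    using Cons by (simp add: pos_count_Cons if_distrib[of of_nat] cong: if_cong)
qed simp

lemma sets_ptmeas [measurable_cong]: "sets (ptmeas c ps) = sets borel"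
  using sets.sigma_sets_eq[of borel] unfolding ptmeas_def by simp

lemma emeasure_ptmeas:
  assumes "A \<in> sets borel"
  shows "emeasure (ptmeas c ps) A = ennreal c * of_nat (pos_count A ps)"
proof -
  have "countably_additive (sets borel) (\<lambda>A. ennreal c * of_nat (pos_count A ps))"
    unfolding countably_additive_def by (simp add: suminf_pos_count)
  moreover have "positive (sets borel) (\<lambda>A. ennreal c * of_nat (pos_count A ps))"
    by (simp add: positive_def pos_count_def)
  ultimately show ?thesis
    using emeasure_measure_of_sigma[OF sets.sigma_algebra_axioms[of borel] _ _ assms]
    unfolding ptmeas_def pos_count_def[symmetric] space_borel by blast
qed

lemma rescale_map_measurable: "(\<lambda>(x, y). (x, y / ennreal r)) \<in> (borel :: pt measure) \<rightarrow>\<^sub>M borel"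
proof -
  have "(\<lambda>p::pt. (fst p, snd p / ennreal r)) \<in> borel \<Otimes>\<^sub>M borel \<rightarrow>\<^sub>M borel \<Otimes>\<^sub>M borel"
    by measurable
  then show ?thesis by (simp add: borel_prod case_prod_beta')
qed

lemma
  assumes "sets (Zm (r * t)) = sets borel"
  shows sets_fluid_scale: "sets (fluid_scale r Zm t) = sets borel"
    and emeasure_fluid_scale:
      "emeasure (fluid_scale r Zm t) (space (fluid_scale r Zm t)) = ennreal (1 / r) * emeasure (Zm (r * t)) UNIV"
proof -
  have "(\<lambda>(x, y). (x, y / ennreal r)) \<in> Zm (r * t) \<rightarrow>\<^sub>M (borel :: pt measure)"
    using rescale_map_measurable by (simp add: measurable_cong_sets[OF assms refl])
  moreover have "space (Zm (r * t)) = UNIV"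
    using sets_eq_imp_space_eq[OF assms] by simp
  ultimately show "sets (fluid_scale r Zm t) = sets borel"
    "emeasure (fluid_scale r Zm t) (space (fluid_scale r Zm t)) = ennreal (1 / r) * emeasure (Zm (r * t)) UNIV"
    by (simp_all add: fluid_scale_def rescale_def emeasure_distr space_scale_measure)
qed

lemma
  assumes "0 < r"
  shows fluid_state_M1: "fluid_scale r (state z0 B0 D0 xi B D S) t \<in> M1"
    and fluid_state_emeasure:
      "emeasure (fluid_scale r (state z0 B0 D0 xi B D S) t) (space (fluid_scale r (state z0 B0 D0 xi B D S) t))
       = ennreal (real (pos_count UNIV (job_pts z0 B0 D0 xi B D S (r * t))) / r)"
    and fluid_state_mass:
      "measure (fluid_scale r (state z0 B0 D0 xi B D S) t) (space (fluid_scale r (state z0 B0 D0 xi B D S) t))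
       = real (pos_count UNIV (job_pts z0 B0 D0 xi B D S (r * t))) / r"
proof -
  let ?X = "fluid_scale r (state z0 B0 D0 xi B D S) t"
  have sets_state: "sets (state z0 B0 D0 xi B D S (r * t)) = sets borel"
    by (simp add: state_def sets_ptmeas)
  have "emeasure ?X (space ?X) = ennreal (1 / r) * ennreal (real (pos_count UNIV (job_pts z0 B0 D0 xi B D S (r * t))))"
    by (simp add: emeasure_fluid_scale[where Zm = "state z0 B0 D0 xi B D S", OF sets_state] state_def emeasure_ptmeas ennreal_of_nat_eq_real_of_nat)
  also have "\<dots> = ennreal (real (pos_count UNIV (job_pts z0 B0 D0 xi B D S (r * t))) / r)"
    using assms by (simp flip: ennreal_mult)
  finally show mass: "emeasure ?X (space ?X) = ennreal (real (pos_count UNIV (job_pts z0 B0 D0 xi B D S (r * t))) / r)" .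
  then show "?X \<in> M1"
    using sets_fluid_scale[where Zm = "state z0 B0 D0 xi B D S", OF sets_state] by (simp add: M1_def)
  show "measure ?X (space ?X) = real (pos_count UNIV (job_pts z0 B0 D0 xi B D S (r * t))) / r"
    using mass assms unfolding measure_def by simp
qed

lemma pos_count_job_pts_le: "pos_count A (job_pts z0 B0 D0 xi B D S t) \<le> z0 + arr_count xi t"
  using pos_count_le_length[of A "job_pts z0 B0 D0 xi B D S t"] by (simp add: job_pts_def)

lemma pos_count_job_pts_0:
  assumes "S 0 = 0" and "\<And>j. j < z0 \<Longrightarrow> 0 < B0 j \<and> 0 < D0 j"
  shows "z0 \<le> pos_count UNIV (job_pts z0 B0 D0 xi B D S 0)"
proof -
  let ?initial = "map (\<lambda>j. (B0 j - ennreal (S 0), D0 j - ennreal 0)) [0..<z0]"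
  have "filter (\<lambda>p. p \<in> UNIV \<and> 0 < fst p \<and> 0 < snd p) ?initial = ?initial"
    using assms by (intro filter_True) auto
  then have "length (filter (\<lambda>p. p \<in> UNIV \<and> 0 < fst p \<and> 0 < snd p) ?initial) = z0"
    by simp
  then show ?thesis unfolding pos_count_def job_pts_def by simp
qed

lemma fluid_state_mass_bound:
  assumes r: "0 < r" and "S 0 = 0" and "\<And>j. j < z0 \<Longrightarrow> 0 < B0 j \<and> 0 < D0 j"
    and initial_mass:
      "measure (fluid_scale r (state z0 B0 D0 xi B D S) 0) (space (fluid_scale r (state z0 B0 D0 xi B D S) 0)) < c0"
    and arrivals: "real (arr_count xi (r * t)) / r \<le> c1"
  shows "emeasure (fluid_scale r (state z0 B0 D0 xi B D S) t) (space (fluid_scale r (state z0 B0 D0 xi B D S) t))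
    \<le> ennreal (c0 + c1)"
proof -
  have "real z0 / r \<le> real (pos_count UNIV (job_pts z0 B0 D0 xi B D S 0)) / r"
    using pos_count_job_pts_0[of S z0 B0 D0 xi B, OF assms(2,3)] r by (simp add: divide_right_mono)
  then have "real z0 / r < c0"
    using initial_mass fluid_state_mass[OF r, of z0 B0 D0 xi B D S 0] by simp
  moreover have "real (pos_count UNIV (job_pts z0 B0 D0 xi B D S (r * t))) / r
      \<le> real z0 / r + real (arr_count xi (r * t)) / r"
    using pos_count_job_pts_le[of UNIV z0 B0 D0 xi B D S "r * t"] r
    by (simp add: add_divide_distrib[symmetric] divide_right_mono)
  ultimately show ?thesis
    using arrivals by (simp add: fluid_state_emeasure[OF r] ennreal_leI)
qed

lemma fluid_state_in_mass_bounded_set: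
  assumes r: "0 < r" and "S 0 = 0" and "\<And>j. j < z0 \<Longrightarrow> 0 < B0 j \<and> 0 < D0 j" and "0 \<le> lam"
    and initial_mass:
      "measure (fluid_scale r (state z0 B0 D0 xi B D S) 0) (space (fluid_scale r (state z0 B0 D0 xi B D S) 0)) < c0"
    and arrivals: "\<forall>t\<in>{0..T}. \<bar>real (arr_count xi (r * t)) / r - lam * t\<bar> \<le> 1"
    and t: "t \<in> {0..T}"
  shows "fluid_scale r (state z0 B0 D0 xi B D S) t \<in> {M \<in> M1. emeasure M (space M) \<le> ennreal (c0 + (lam * T + 1))}"
proof -
  have "lam * t \<le> lam * T" using t \<open>0 \<le> lam\<close> by (intro mult_left_mono) auto
  then have "real (arr_count xi (r * t)) / r \<le> lam * T + 1"
    using arrivals t by fastforce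
  then show ?thesis
    using fluid_state_mass_bound[OF assms(1-3) initial_mass] fluid_state_M1[OF r] by simp
qed

section \<open>Compact containment\<close>

lemma outer_prob_approx:
  assumes "A \<subseteq> space M" "0 < e"
  shows "\<exists>B. B \<in> sets M \<and> A \<subseteq> B \<and> measure M B < outer_prob M A + e"
proof -
  let ?S = "{measure M B | B. B \<in> sets M \<and> A \<subseteq> B}"
  have "space M \<in> sets M" by simp
  then have "measure M (space M) \<in> ?S" using assms(1) by blast
  then have nonempty: "?S \<noteq> {}" by blast
  have "Inf ?S < outer_prob M A + e" using assms(2) by (simp add: outer_prob_def)
  from cInf_lessD[OF nonempty this] obtain x where "x \<in> ?S" "x < outer_prob M A + e" by blast
  then show ?thesis by blast
qed

lemma measure_le_inner_prob:
  assumes "finite_measure M" "B \<in> sets M" "B \<subseteq> A"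
  shows "measure M B \<le> inner_prob M A"
  unfolding inner_prob_def
proof (rule cSup_upper)
  show "measure M B \<in> {measure M B | B. B \<in> sets M \<and> B \<subseteq> A}" using assms(2,3) by blast
  show "bdd_above {measure M B | B. B \<in> sets M \<and> B \<subseteq> A}"
    using finite_measure.bounded_measure[OF assms(1)] by (intro bdd_aboveI) blast
qed

lemma integral_le_prob_positive:
  fixes f :: "'a \<Rightarrow> real"
  assumes "prob_space M" "integrable M f" "\<And>\<omega>. \<omega> \<in> space M \<Longrightarrow> 0 \<le> f \<omega> \<and> f \<omega> \<le> 1"
  shows "(\<integral>\<omega>. f \<omega> \<partial>M) \<le> measure M {\<omega> \<in> space M. 0 < f \<omega>}"
proof -
  interpret prob_space M by fact
  have pos_sets: "{\<omega> \<in> space M. 0 < f \<omega>} \<in> sets M"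
    using assms(2) by measurable
  have "integrable M (indicator {\<omega> \<in> space M. 0 < f \<omega>} :: 'a \<Rightarrow> real)"
    using pos_sets by (intro integrable_real_indicator) (simp_all add: less_top[symmetric])
  then have "(\<integral>\<omega>. f \<omega> \<partial>M) \<le> (\<integral>\<omega>. indicator {\<omega> \<in> space M. 0 < f \<omega>} \<omega> \<partial>M)"
    by (rule integral_mono[OF assms(2)]) (use assms(3) in \<open>auto simp: indicator_def\<close>)
  also have "\<dots> = measure M {\<omega> \<in> space M. 0 < f \<omega>}"
    using pos_sets by simp
  finally show ?thesis .
qed

lemma integral_minus_measure_le_inner_prob:
  fixes f :: "'a \<Rightarrow> real"
  assumes M: "prob_space M" and f: "integrable M f" "\<And>\<omega>. \<omega> \<in> space M \<Longrightarrow> 0 \<le> f \<omega> \<and> f \<omega> \<le> 1"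
    and B: "B \<in> sets M" and good: "\<And>\<omega>. \<omega> \<in> space M \<Longrightarrow> 0 < f \<omega> \<Longrightarrow> \<omega> \<notin> B \<Longrightarrow> \<omega> \<in> A"
  shows "(\<integral>\<omega>. f \<omega> \<partial>M) - measure M B \<le> inner_prob M A"
proof -
  interpret prob_space M by (rule M)
  define P where "P = {\<omega> \<in> space M. 0 < f \<omega>}"
  have P: "P \<in> sets M"
    unfolding P_def using f(1) by measurable
  have "(\<integral>\<omega>. f \<omega> \<partial>M) \<le> measure M P"
    unfolding P_def using f by (rule integral_le_prob_positive[OF M])
  also have "\<dots> \<le> measure M ((P - B) \<union> B)"
    using B P by (intro finite_measure_mono) auto
  also have "\<dots> \<le> measure M (P - B) + measure M B"
    using B P by (intro measure_subadditive) auto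
  also have "measure M (P - B) \<le> inner_prob M A"
    using B P good by (intro measure_le_inner_prob finite_measure_axioms) (auto simp: P_def)
  finally show ?thesis by simp
qed

lemma liminf_inner_prob_ge_one:
  fixes M :: "nat \<Rightarrow> 'a measure" and f :: "nat \<Rightarrow> 'a \<Rightarrow> real"
  assumes M: "\<And>n. prob_space (M n)"
    and f: "\<And>n \<omega>. 0 \<le> f n \<omega> \<and> f n \<omega> \<le> 1" and f_lim: "(\<lambda>n. \<integral>\<omega>. f n \<omega> \<partial>M n) \<longlonglongrightarrow> 1"
    and Bad: "\<And>n. Bad n \<subseteq> space (M n)" and Bad_lim: "(\<lambda>n. outer_prob (M n) (Bad n)) \<longlonglongrightarrow> 0"
    and good: "\<And>n \<omega>. \<omega> \<in> space (M n) \<Longrightarrow> 0 < f n \<omega> \<Longrightarrow> \<omega> \<notin> Bad n \<Longrightarrow> \<omega> \<in> A n"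
  shows "1 \<le> liminf (\<lambda>n. ereal (inner_prob (M n) (A n)))"
proof -
  have "\<forall>n. \<exists>B. B \<in> sets (M n) \<and> Bad n \<subseteq> B \<and>
      measure (M n) B < outer_prob (M n) (Bad n) + 1 / Suc n"
    using outer_prob_approx[OF Bad] by simp
  then obtain B where B: "\<forall>n. B n \<in> sets (M n) \<and> Bad n \<subseteq> B n \<and>
      measure (M n) (B n) < outer_prob (M n) (Bad n) + 1 / Suc n"
    by (rule choice[THEN exE])
  define L where "L n = (\<integral>\<omega>. f n \<omega> \<partial>M n) - outer_prob (M n) (Bad n) - 1 / Suc n" for n
  have "L \<longlonglongrightarrow> 1 - 0 - 0"
    unfolding L_def using LIMSEQ_inverse_real_of_nat
    by (intro tendsto_diff f_lim Bad_lim) (simp add: inverse_eq_divide)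
  then have "(\<lambda>n. ereal (L n)) \<longlonglongrightarrow> ereal (1 - 0 - 0)"
    by (rule tendsto_ereal)
  then have L_liminf: "liminf (\<lambda>n. ereal (L n)) = ereal (1 - 0 - 0)"
    by (intro lim_imp_Liminf) simp_all
  have "eventually (\<lambda>n. 1 / 2 < (\<integral>\<omega>. f n \<omega> \<partial>M n)) sequentially"
    using order_tendstoD(1)[OF f_lim, of "1 / 2"] by simp
  then have "eventually (\<lambda>n. L n \<le> inner_prob (M n) (A n)) sequentially"
  proof eventually_elim
    case (elim n)
    \<comment> \<open>a non-integrable function has integral 0, so integrability comes for free\<close>
    have "integrable (M n) (f n)"
      using elim not_integrable_integral_eq by fastforce
    moreover have Bn: "B n \<in> sets (M n)" "Bad n \<subseteq> B n"
      "measure (M n) (B n) < outer_prob (M n) (Bad n) + 1 / Suc n"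
      using B by blast+
    ultimately have "(\<integral>\<omega>. f n \<omega> \<partial>M n) - measure (M n) (B n) \<le> inner_prob (M n) (A n)"
      using f by (intro integral_minus_measure_le_inner_prob[OF M]) (auto intro!: good)
    with Bn(3) show ?case unfolding L_def by linarith
  qed
  then have "liminf (\<lambda>n. ereal (L n)) \<le> liminf (\<lambda>n. ereal (inner_prob (M n) (A n)))"
    by (intro Liminf_mono) (auto elim: eventually_mono)
  with L_liminf show ?thesis by (simp add: one_ereal_def)
qed

lemma conv_distr_M1_truncated_mass:
  assumes "conv_distr_M1 Om X mu"
  shows "(\<lambda>n. \<integral>\<omega>. max 0 (min 1 (c - measure (X n \<omega>) (space (X n \<omega>)))) \<partial>Om n)
    \<longlonglongrightarrow> max 0 (min 1 (c - measure mu (space mu)))"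
proof -
  define \<Phi> where "\<Phi> M = max 0 (min 1 (c - (\<integral>p. 1 \<partial>M)))" for M :: "pt measure"
  have "continuous_map weak_top euclideanreal \<Phi>"
    unfolding \<Phi>_def by (intro continuous_map_weak_top_total_mass continuous_intros)
  moreover have "bounded (\<Phi> ` M1)"
    by (rule boundedI[of _ 1]) (auto simp: \<Phi>_def)
  ultimately have "(\<lambda>n. \<integral>\<omega>. \<Phi> (X n \<omega>) \<partial>Om n) \<longlonglongrightarrow> \<Phi> mu"
    using assms unfolding conv_distr_M1_def by blast
  then show ?thesis by (simp add: \<Phi>_def)
qed

theorem mainTheorem12:
  fixes lam :: real and theta zeta0 :: "pt measure"
    and rr :: "nat \<Rightarrow> real" and Om :: "nat \<Rightarrow> 'w measure"
    and lamr :: "nat \<Rightarrow> real" and xi :: "nat \<Rightarrow> nat \<Rightarrow> 'w \<Rightarrow> real"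
    and Bv Dv :: "nat \<Rightarrow> nat \<Rightarrow> 'w \<Rightarrow> ennreal" and thetar :: "nat \<Rightarrow> pt measure"
    and Z0 :: "nat \<Rightarrow> 'w \<Rightarrow> nat" and B0 D0 :: "nat \<Rightarrow> nat \<Rightarrow> 'w \<Rightarrow> ennreal"
    and S :: "nat \<Rightarrow> 'w \<Rightarrow> real \<Rightarrow> real" and Zc :: "nat \<Rightarrow> 'w \<Rightarrow> real \<Rightarrow> nat"
    and T \<eta> :: real
  \<comment> \<open>fluid data\<close>
  assumes lam_pos: "lam > 0"
    and theta_prob: "prob_space theta" and theta_sets: "sets theta = sets borel"
    and theta_nomass: "emeasure theta ({0} \<times> UNIV) = 0" "emeasure theta (UNIV \<times> {0}) = 0"
                      "emeasure theta {(\<infinity>, \<infinity>)} = 0"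
    and rho_gt1: "ennreal lam * (\<integral>\<^sup>+ p. fst p \<partial>theta) > 1"
    and zeta0_M1: "zeta0 \<in> M1"
    and zeta0_noatoms: "\<And>x::real. x \<ge> 0 \<Longrightarrow>
           emeasure zeta0 ({ennreal x} \<times> UNIV) = 0 \<and> emeasure zeta0 (UNIV \<times> {ennreal x}) = 0"
  \<comment> \<open>the index sequence r\<close>
    and rr_mono: "strict_mono rr" and rr_top: "filterlim rr at_top sequentially"
    and rr_pos: "\<And>n. rr n > 0"
  \<comment> \<open>probability spaces and delayed renewal arrivals of rate lamr n\<close>
    and Om_prob: "\<And>n. prob_space (Om n)"
    and lamr_pos: "\<And>n. lamr n > 0"
    and xi_indep: "\<And>n. prob_space.indep_vars (Om n) (\<lambda>_. borel) (xi n) UNIV"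
    and xi_nonneg: "\<And>n k \<omega>. \<omega> \<in> space (Om n) \<Longrightarrow> xi n k \<omega> \<ge> 0"
    and xi_ident: "\<And>n k. distr (Om n) borel (xi n (Suc k)) = distr (Om n) borel (xi n 1)"
    and xi_mean: "\<And>n. integrable (Om n) (xi n 1) \<and> (\<integral>\<omega>. xi n 1 \<omega> \<partial>Om n) = 1 / lamr n"
  \<comment> \<open>i.i.d. job pairs with law thetar n\<close>
    and pairs_indep: "\<And>n. prob_space.indep_vars (Om n) (\<lambda>_. borel) (\<lambda>i \<omega>. (Bv n i \<omega>, Dv n i \<omega>)) UNIV"
    and pairs_law: "\<And>n i. distr (Om n) borel (\<lambda>\<omega>. (Bv n i \<omega>, Dv n i \<omega>)) = thetar n"
    and thetar_nomass: "\<And>n. emeasure (thetar n) ({0} \<times> UNIV) = 0 \<and> emeasure (thetar n) (UNIV \<times> {0}) = 0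
                              \<and> emeasure (thetar n) {(\<infinity>, \<infinity>)} = 0"
  \<comment> \<open>initial condition\<close>
    and Z0_meas: "\<And>n. Z0 n \<in> measurable (Om n) (count_space UNIV)"
    and Z0_mean: "\<And>n. integrable (Om n) (\<lambda>\<omega>. real (Z0 n \<omega>))"
    and init_indep: "\<And>n. prob_space.indep_vars (Om n) (\<lambda>_. borel) (\<lambda>j \<omega>. (B0 n j \<omega>, D0 n j \<omega>)) UNIV"
    and init_ident: "\<And>n j. distr (Om n) borel (\<lambda>\<omega>. (B0 n j \<omega>, D0 n j \<omega>))
                          = distr (Om n) borel (\<lambda>\<omega>. (B0 n 0 \<omega>, D0 n 0 \<omega>))"
    and init_vals: "\<And>n j \<omega>. \<omega> \<in> space (Om n) \<Longrightarrow>
           0 < B0 n j \<omega> \<and> 0 < D0 n j \<omega> \<and> \<not> (B0 n j \<omega> = \<infinity> \<and> D0 n j \<omega> = \<infinity>)"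
  \<comment> \<open>processor sharing dynamics: S is the cumulative service per job, Zc the number of jobs\<close>
    and dynamics: "\<And>n \<omega> t. \<omega> \<in> space (Om n) \<Longrightarrow> t \<ge> 0 \<Longrightarrow>
           (\<lambda>s. if Zc n \<omega> s = 0 then 0 else 1 / real (Zc n \<omega> s)) integrable_on {0..t}
         \<and> S n \<omega> t = integral {0..t} (\<lambda>s. if Zc n \<omega> s = 0 then 0 else 1 / real (Zc n \<omega> s))
         \<and> emeasure (state (Z0 n \<omega>) (\<lambda>j. B0 n j \<omega>) (\<lambda>j. D0 n j \<omega>) (\<lambda>k. xi n k \<omega>)
                      (\<lambda>i. Bv n i \<omega>) (\<lambda>i. Dv n i \<omega>) (S n \<omega>) t) UNIV = of_nat (Zc n \<omega> t)"
  \<comment> \<open>convergence assumptions\<close>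
    and arrivals_conv: "\<And>T' \<epsilon>. T' > 0 \<Longrightarrow> \<epsilon> > 0 \<Longrightarrow>
           (\<lambda>n. outer_prob (Om n) {\<omega> \<in> space (Om n). \<exists>t\<in>{0..T'}.
               \<bar>real (arr_count (\<lambda>k. xi n k \<omega>) (rr n * t)) / rr n - lam * t\<bar> > \<epsilon>}) \<longlonglongrightarrow> 0"
    and theta_conv: "weak_conv (\<lambda>n. rescale (rr n) (thetar n)) theta"
    and init_conv: "conv_distr_M1 Om
           (\<lambda>n \<omega>. fluid_scale (rr n) (state (Z0 n \<omega>) (\<lambda>j. B0 n j \<omega>) (\<lambda>j. D0 n j \<omega>) (\<lambda>k. xi n k \<omega>)
                      (\<lambda>i. Bv n i \<omega>) (\<lambda>i. Dv n i \<omega>) (S n \<omega>)) 0) zeta0"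
    and T_pos: "T > 0" and eta_pos: "\<eta> > 0"
  shows "\<exists>K. compactin weak_top K \<and>
     liminf (\<lambda>n. ereal (inner_prob (Om n) {\<omega> \<in> space (Om n). \<forall>t\<in>{0..T}.
        fluid_scale (rr n) (state (Z0 n \<omega>) (\<lambda>j. B0 n j \<omega>) (\<lambda>j. D0 n j \<omega>) (\<lambda>k. xi n k \<omega>)
                      (\<lambda>i. Bv n i \<omega>) (\<lambda>i. Dv n i \<omega>) (S n \<omega>)) t \<in> K})) \<ge> ereal (1 - \<eta>)"
proof -
  define X where "X n \<omega> = fluid_scale (rr n) (state (Z0 n \<omega>) (\<lambda>j. B0 n j \<omega>) (\<lambda>j. D0 n j \<omega>)
    (\<lambda>k. xi n k \<omega>) (\<lambda>i. Bv n i \<omega>) (\<lambda>i. Dv n i \<omega>) (S n \<omega>))" for n \<omega>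
  define C0 where "C0 = measure zeta0 (space zeta0)"
  define K where "K = {M \<in> M1. emeasure M (space M) \<le> ennreal (C0 + 1 + (lam * T + 1))}"
  have initial: "(\<lambda>n. \<integral>\<omega>. max 0 (min 1 (C0 + 1 - measure (X n \<omega> 0) (space (X n \<omega> 0)))) \<partial>Om n) \<longlonglongrightarrow> 1"
    using conv_distr_M1_truncated_mass[OF init_conv, of "C0 + 1"] by (simp add: X_def C0_def)
  have likely: "1 \<le> liminf (\<lambda>n. ereal (inner_prob (Om n) {\<omega> \<in> space (Om n). \<forall>t\<in>{0..T}. X n \<omega> t \<in> K}))"
  proof (rule liminf_inner_prob_ge_one[OF Om_prob _ initial _ arrivals_conv[OF T_pos zero_less_one]])
    fix n \<omega> assume \<omega>: "\<omega> \<in> space (Om n)"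
      and "0 < max 0 (min 1 (C0 + 1 - measure (X n \<omega> 0) (space (X n \<omega> 0))))"
      and "\<omega> \<notin> {\<omega> \<in> space (Om n). \<exists>t\<in>{0..T}.
         \<bar>real (arr_count (\<lambda>k. xi n k \<omega>) (rr n * t)) / rr n - lam * t\<bar> > 1}"
    then have "measure (X n \<omega> 0) (space (X n \<omega> 0)) < C0 + 1"
      and "\<forall>t\<in>{0..T}. \<bar>real (arr_count (\<lambda>k. xi n k \<omega>) (rr n * t)) / rr n - lam * t\<bar> \<le> 1"
      by (auto simp: not_less)
    then show "\<omega> \<in> {\<omega> \<in> space (Om n). \<forall>t\<in>{0..T}. X n \<omega> t \<in> K}"
      using dynamics[OF \<omega>, of 0] init_vals[OF \<omega>] lam_pos unfolding K_def X_def
      by (intro CollectI conjI \<omega> ballI fluid_state_in_mass_bounded_set[OF rr_pos]) auto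
  qed auto
  have "compactin weak_top K"
    unfolding K_def C0_def using lam_pos T_pos by (intro compactin_mass_bounded) auto
  moreover have "ereal (1 - \<eta>) \<le> liminf (\<lambda>n. ereal (inner_prob (Om n)
      {\<omega> \<in> space (Om n). \<forall>t\<in>{0..T}. X n \<omega> t \<in> K}))"
    by (rule order_trans[OF _ likely]) (use eta_pos in simp)
  ultimately show ?thesis unfolding X_def by blast
qed

end
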